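(* If $G$ is a prime $\{P_5,\overline{P_5},C_5,\text{bull}\}$-free graph, then either $G$ or $\overline{G}$ is a half graph.
   Context: All graphs are finite and simple. $P_n$ is the path on $n$ vertices, $C_n$ the cycle of length $n$, $\overline{G}$ the complement. $G$ is $\mathcal F$-free if it has no induced subgraph isomorphic to a member of $\mathcal F$. The bull is the graph with vertex set $\{x_1,x_2,x_3,y,z\}$ and edge set $\{x_1x_2,x_2x_3,x_1x_3,x_1y,x_2z\}$. A vertex $b\notin X$ is mixed on $X$ if it has both a neighbor and a non-neighbor in $X$. A homogeneous set is a set $X\subseteq V(G)$ with $1<|X|<|V(G)|$ such that no vertex outside $X$ is mixed on $X$. $G$ is prime if $|V(G)|\ge4$ and has no homogeneous set. For $k\ge1$, $O_k$ is the bipartite graph with vertex set $\{a_1,\dots,a_k,b_1,\dots,b_k\}$ in which the only edges are $a_ib_j$ for $i+j\ge k+1$; a half graph is a graph isomorphic to $O_k$ for some $k$. *)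

theory Defs
  imports Main
begin

definition graph :: "'a set \<Rightarrow> ('a \<Rightarrow> 'a \<Rightarrow> bool) \<Rightarrow> bool" where
  "graph V E \<longleftrightarrow> finite V \<and> (\<forall>x y. E x y \<longrightarrow> x \<in> V \<and> y \<in> V) \<and>
     (\<forall>x y. E x y \<longrightarrow> E y x) \<and> (\<forall>x. \<not> E x x)"

definition compl_edges :: "'a set \<Rightarrow> ('a \<Rightarrow> 'a \<Rightarrow> bool) \<Rightarrow> 'a \<Rightarrow> 'a \<Rightarrow> bool" where
  "compl_edges V E x y \<longleftrightarrow> x \<in> V \<and> y \<in> V \<and> x \<noteq> y \<and> \<not> E x y"

definition graph_iso :: "'b set \<Rightarrow> ('b \<Rightarrow> 'b \<Rightarrow> bool) \<Rightarrow> 'a set \<Rightarrow> ('a \<Rightarrow> 'a \<Rightarrow> bool)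
    \<Rightarrow> ('b \<Rightarrow> 'a) \<Rightarrow> bool" where
  "graph_iso W F V E f \<longleftrightarrow> bij_betw f W V \<and>
     (\<forall>x\<in>W. \<forall>y\<in>W. F x y \<longleftrightarrow> E (f x) (f y))"

definition has_induced :: "'a set \<Rightarrow> ('a \<Rightarrow> 'a \<Rightarrow> bool) \<Rightarrow> 'b set \<Rightarrow> ('b \<Rightarrow> 'b \<Rightarrow> bool) \<Rightarrow> bool" where
  "has_induced V E W F \<longleftrightarrow> (\<exists>U. U \<subseteq> V \<and> (\<exists>f. graph_iso W F U E f))"

definition P5_edges :: "nat \<Rightarrow> nat \<Rightarrow> bool" where
  "P5_edges i j \<longleftrightarrow> i \<le> 4 \<and> j \<le> 4 \<and> (i = j + 1 \<or> j = i + 1)"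

definition C5_edges :: "nat \<Rightarrow> nat \<Rightarrow> bool" where
  "C5_edges i j \<longleftrightarrow> P5_edges i j \<or> (i = 0 \<and> j = 4) \<or> (i = 4 \<and> j = 0)"

text \<open>Bull: x1=0, x2=1, x3=2, y=3, z=4; edges x1x2, x2x3, x1x3, x1y, x2z.\<close>
definition bull_edges :: "nat \<Rightarrow> nat \<Rightarrow> bool" where
  "bull_edges i j \<longleftrightarrow> {i, j} \<in> {{0,1}, {1,2}, {0,2}, {0,3}, {1,4}}"

definition F5 :: "nat set" where "F5 = {0..4}"

definition free_P5_coP5_C5_bull :: "'a set \<Rightarrow> ('a \<Rightarrow> 'a \<Rightarrow> bool) \<Rightarrow> bool" where
  "free_P5_coP5_C5_bull V E \<longleftrightarrow>
     \<not> has_induced V E F5 P5_edges \<and>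
     \<not> has_induced V E F5 (compl_edges F5 P5_edges) \<and>
     \<not> has_induced V E F5 C5_edges \<and>
     \<not> has_induced V E F5 bull_edges"

definition mixed :: "('a \<Rightarrow> 'a \<Rightarrow> bool) \<Rightarrow> 'a \<Rightarrow> 'a set \<Rightarrow> bool" where
  "mixed E b X \<longleftrightarrow> b \<notin> X \<and> (\<exists>x\<in>X. E b x) \<and> (\<exists>x\<in>X. \<not> E b x)"

definition homogeneous :: "'a set \<Rightarrow> ('a \<Rightarrow> 'a \<Rightarrow> bool) \<Rightarrow> 'a set \<Rightarrow> bool" where
  "homogeneous V E X \<longleftrightarrow> X \<subseteq> V \<and> 1 < card X \<and> card X < card V \<and>
     (\<forall>b\<in>V - X. \<not> mixed E b X)"

definition prime_graph :: "'a set \<Rightarrow> ('a \<Rightarrow> 'a \<Rightarrow> bool) \<Rightarrow> bool" where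
  "prime_graph V E \<longleftrightarrow> card V \<ge> 4 \<and> (\<nexists>X. homogeneous V E X)"

text \<open>Half graph O_k: vertices a_i = Inl i, b_j = Inr j (1 \<le> i, j \<le> k);
edges exactly a_i b_j with i + j \<ge> k + 1.\<close>
definition O_verts :: "nat \<Rightarrow> (nat + nat) set" where
  "O_verts k = Inl ` {1..k} \<union> Inr ` {1..k}"

definition O_edges :: "nat \<Rightarrow> nat + nat \<Rightarrow> nat + nat \<Rightarrow> bool" where
  "O_edges k u v \<longleftrightarrow> u \<in> O_verts k \<and> v \<in> O_verts k \<and>
     (\<exists>i j. ((u = Inl i \<and> v = Inr j) \<or> (u = Inr j \<and> v = Inl i)) \<and> i + j \<ge> k + 1)"

definition half_graph :: "'a set \<Rightarrow> ('a \<Rightarrow> 'a \<Rightarrow> bool) \<Rightarrow> bool" where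
  "half_graph V E \<longleftrightarrow> (\<exists>k\<ge>1. \<exists>f. graph_iso (O_verts k) (O_edges k) V E f)"

end

theory Submission
  imports Defs
begin

text \<open>A prime graph contains an induced \<open>P\<^sub>4\<close>, which is the half graph \<open>O\<^sub>2\<close>. Take a longest
  induced half graph \<open>H\<close> in \<open>G\<close> or in its complement; as the hypotheses are self-complementary we may
  assume it lies in \<open>G\<close>. Excluding \<open>P\<^sub>5\<close>, its complement, \<open>C\<^sub>5\<close> and the bull forces every vertex
  outside \<open>H\<close> to be complete to \<open>H\<close>, anticomplete to \<open>H\<close>, or a twin of a single vertex of \<open>H\<close>
  (agreeing with it on the rest of \<open>H\<close>). Whenever such configurations misbehave, one either finds a
  forbidden subgraph or lengthens \<open>H\<close>. What survives is: non-twins see each twin as they see its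
  partner, and twins of distinct vertices are adjacent exactly when their partners are. So if
  \<open>V \<noteq> H\<close>, then \<open>H\<close> together with all twins, or else a vertex of \<open>H\<close> together with its twins, is
  a homogeneous set, contradicting primality.\<close>

section \<open>Forbidden induced subgraphs\<close>

lemma graphD:
  assumes "graph V E"
  shows "finite V" "E x y \<Longrightarrow> x \<in> V" "E x y \<Longrightarrow> y \<in> V" "E x y \<Longrightarrow> E y x" "\<not> E x x"
  using assms unfolding graph_def by auto

lemma F5_eq: "F5 = {0,1,2,3,4}" unfolding F5_def by auto

lemma has_induced_F5I:
  assumes "{v0,v1,v2,v3,v4} \<subseteq> V" "distinct [v0,v1,v2,v3,v4]"
    and "\<forall>i\<in>F5. \<forall>j\<in>F5. F i j \<longleftrightarrow> E ([v0,v1,v2,v3,v4]!i) ([v0,v1,v2,v3,v4]!j)"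
  shows "has_induced V E F5 F"
proof -
  define f where "f = (\<lambda>i. [v0,v1,v2,v3,v4] ! i)"
  have "bij_betw f F5 {v0,v1,v2,v3,v4}"
    unfolding bij_betw_def inj_on_def f_def F5_eq using assms(2) by auto
  moreover have "\<forall>x\<in>F5. \<forall>y\<in>F5. F x y \<longleftrightarrow> E (f x) (f y)" using assms(3) unfolding f_def by auto
  ultimately show ?thesis unfolding has_induced_def graph_iso_def using assms(1) by blast
qed

lemma has_induced_F5D:
  assumes "has_induced V E F5 F"
  obtains v where "\<And>i. i \<in> F5 \<Longrightarrow> v i \<in> V" "inj_on v F5"
    "\<And>i j. i \<in> F5 \<Longrightarrow> j \<in> F5 \<Longrightarrow> F i j \<longleftrightarrow> E (v i) (v j)"
proof -
  from assms obtain U f where "U \<subseteq> V" and "graph_iso F5 F U E f"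
    unfolding has_induced_def by blast
  then show ?thesis unfolding graph_iso_def bij_betw_def by (intro that[of f]) auto
qed

lemma inj_on_F5_distinct: "inj_on v F5 \<Longrightarrow> distinct [v 0, v 1, v 2, v 3, v 4]"
  unfolding inj_on_def F5_eq by auto

lemma prime_graph_no_homogeneous_set:
  assumes "prime_graph V E" "graph V E" "X \<subseteq> V" "2 \<le> card X" "X \<noteq> V"
    and "\<And>b. b \<in> V - X \<Longrightarrow> (\<forall>x\<in>X. E b x) \<or> (\<forall>x\<in>X. \<not> E b x)"
  shows False
proof -
  have "card X < card V" using assms(2,3,5) graphD(1) by (meson psubsetI psubset_card_mono)
  hence "homogeneous V E X" unfolding homogeneous_def mixed_def using assms(3,4,6) by fastforce
  thus False using assms(1) unfolding prime_graph_def by blast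
qed

lemma graph_compl_edges: "graph V E \<Longrightarrow> graph V (compl_edges V E)"
  unfolding graph_def compl_edges_def by auto

lemma compl_edges_compl_edges: "graph V E \<Longrightarrow> compl_edges V (compl_edges V E) = E"
  unfolding graph_def compl_edges_def by (intro ext) auto

lemma compl_edges_iff: "x \<in> V \<Longrightarrow> y \<in> V \<Longrightarrow> x \<noteq> y \<Longrightarrow> compl_edges V E x y \<longleftrightarrow> \<not> E x y"
  unfolding compl_edges_def by auto

lemma prime_graph_compl_edges:
  assumes "prime_graph V E" shows "prime_graph V (compl_edges V E)"
proof -
  have "homogeneous V E X" if "homogeneous V (compl_edges V E) X" for X
    using that unfolding homogeneous_def mixed_def compl_edges_def by fastforce
  thus ?thesis using assms unfolding prime_graph_def by blast
qed

locale forbidden_free =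
  fixes V :: "'a set" and E :: "'a \<Rightarrow> 'a \<Rightarrow> bool"
  assumes graph: "graph V E" and free: "free_P5_coP5_C5_bull V E"
begin

lemma adj_sym: "E x y \<Longrightarrow> E y x" using graphD[OF graph] by blast
lemma adj_irrefl [simp]: "\<not> E x x" using graphD[OF graph] by blast
lemma adj_commute: "E x y \<longleftrightarrow> E y x" using adj_sym by blast
lemma nadj_sym: "\<not> E x y \<Longrightarrow> \<not> E y x" using adj_sym by blast
lemma finite_V: "finite V" using graphD[OF graph] by blast

lemma no_induced_P5:
  assumes "v0 \<in> V" "v1 \<in> V" "v2 \<in> V" "v3 \<in> V" "v4 \<in> V" "distinct [v0,v1,v2,v3,v4]"
    and "E v0 v1" "E v1 v2" "E v2 v3" "E v3 v4"
    and "\<not>E v0 v2" "\<not>E v0 v3" "\<not>E v0 v4" "\<not>E v1 v3" "\<not>E v1 v4" "\<not>E v2 v4"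
  shows False
proof -
  have "has_induced V E F5 P5_edges"
    apply (rule has_induced_F5I[of v0 v1 v2 v3 v4])
    using assms apply simp
    using assms apply simp
    unfolding F5_eq P5_edges_def using assms assms(7-10)[THEN adj_sym] assms(11-16)[THEN nadj_sym] by auto
  thus False using free unfolding free_P5_coP5_C5_bull_def by blast
qed

lemma no_induced_coP5:
  assumes "v0 \<in> V" "v1 \<in> V" "v2 \<in> V" "v3 \<in> V" "v4 \<in> V" "distinct [v0,v1,v2,v3,v4]"
    and "\<not>E v0 v1" "\<not>E v1 v2" "\<not>E v2 v3" "\<not>E v3 v4"
    and "E v0 v2" "E v0 v3" "E v0 v4" "E v1 v3" "E v1 v4" "E v2 v4"
  shows False
proof -
  have "has_induced V E F5 (compl_edges F5 P5_edges)"
    apply (rule has_induced_F5I[of v0 v1 v2 v3 v4])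
    using assms apply simp
    using assms apply simp
    unfolding F5_eq P5_edges_def compl_edges_def
    using assms assms(7-10)[THEN nadj_sym] assms(11-16)[THEN adj_sym] by auto
  thus False using free unfolding free_P5_coP5_C5_bull_def by blast
qed

lemma no_induced_C5:
  assumes "v0 \<in> V" "v1 \<in> V" "v2 \<in> V" "v3 \<in> V" "v4 \<in> V" "distinct [v0,v1,v2,v3,v4]"
    and "E v0 v1" "E v1 v2" "E v2 v3" "E v3 v4" "E v4 v0"
    and "\<not>E v0 v2" "\<not>E v0 v3" "\<not>E v1 v3" "\<not>E v1 v4" "\<not>E v2 v4"
  shows False
proof -
  have "has_induced V E F5 C5_edges"
    apply (rule has_induced_F5I[of v0 v1 v2 v3 v4])
    using assms apply simp
    using assms apply simp
    unfolding F5_eq C5_edges_def P5_edges_def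
    using assms assms(7-11)[THEN adj_sym] assms(12-16)[THEN nadj_sym] by auto
  thus False using free unfolding free_P5_coP5_C5_bull_def by blast
qed

lemma no_induced_bull:
  assumes "v0 \<in> V" "v1 \<in> V" "v2 \<in> V" "v3 \<in> V" "v4 \<in> V" "distinct [v0,v1,v2,v3,v4]"
    and "E v0 v1" "E v1 v2" "E v0 v2" "E v0 v3" "E v1 v4"
    and "\<not>E v0 v4" "\<not>E v1 v3" "\<not>E v2 v3" "\<not>E v2 v4" "\<not>E v3 v4"
  shows False
proof -
  have "has_induced V E F5 bull_edges"
    apply (rule has_induced_F5I[of v0 v1 v2 v3 v4])
    using assms apply simp
    using assms apply simp
    unfolding F5_eq bull_edges_def using assms assms(7-11)[THEN adj_sym] assms(12-16)[THEN nadj_sym]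
    by (auto simp: insert_commute doubleton_eq_iff)
  thus False using free unfolding free_P5_coP5_C5_bull_def by blast
qed

text \<open>The house is the complement of \<open>P\<^sub>5\<close>.\<close>
lemma no_induced_house:
  assumes "r \<in> V" "s1 \<in> V" "s2 \<in> V" "s3 \<in> V" "s4 \<in> V" "distinct [r,s1,s2,s3,s4]"
    and "E s1 s2" "E s2 s3" "E s3 s4" "E s4 s1" "E r s1" "E r s2"
    and "\<not>E r s3" "\<not>E r s4" "\<not>E s1 s3" "\<not>E s2 s4"
  shows False
  by (rule no_induced_coP5[of s1 s3 r s4 s2]) (use assms in \<open>auto simp: adj_commute\<close>)

lemma compl_edges_free: "free_P5_coP5_C5_bull V (compl_edges V E)"
proof -
  let ?C = "compl_edges V E"
  have transfer: "\<exists>v. (\<forall>i\<in>F5. v i \<in> V) \<and> distinct [v 0, v 1, v 2, v 3, v 4] \<and>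
        (\<forall>i\<in>F5. \<forall>j\<in>F5. i \<noteq> j \<longrightarrow> (F i j \<longleftrightarrow> \<not> E (v i) (v j)))"
    if induced: "has_induced V ?C F5 F" for F
  proof -
    obtain v where v: "\<And>i. i \<in> F5 \<Longrightarrow> v i \<in> V" "inj_on v F5"
      "\<And>i j. i \<in> F5 \<Longrightarrow> j \<in> F5 \<Longrightarrow> F i j \<longleftrightarrow> ?C (v i) (v j)"
      using has_induced_F5D[OF induced] by metis
    show ?thesis
      apply (rule exI[of _ v])
      using v(1,3) inj_on_F5_distinct[OF v(2)] v(2) unfolding inj_on_def
      by (auto simp: compl_edges_def)
  qed
  have "\<not> has_induced V ?C F5 P5_edges"
  proof
    assume "has_induced V ?C F5 P5_edges"
    then obtain v where "\<forall>i\<in>F5. v i \<in> V" "distinct [v 0, v 1, v 2, v 3, v 4]"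
      "\<forall>i\<in>F5. \<forall>j\<in>F5. i \<noteq> j \<longrightarrow> (P5_edges i j \<longleftrightarrow> \<not> E (v i) (v j))"
      using transfer by blast
    then show False
      by (intro no_induced_coP5[of "v 0" "v 1" "v 2" "v 3" "v 4"]) (auto simp: F5_eq P5_edges_def)
  qed
  moreover have "\<not> has_induced V ?C F5 (compl_edges F5 P5_edges)"
  proof
    assume "has_induced V ?C F5 (compl_edges F5 P5_edges)"
    then obtain v where "\<forall>i\<in>F5. v i \<in> V" "distinct [v 0, v 1, v 2, v 3, v 4]"
      "\<forall>i\<in>F5. \<forall>j\<in>F5. i \<noteq> j \<longrightarrow> (compl_edges F5 P5_edges i j \<longleftrightarrow> \<not> E (v i) (v j))"
      using transfer by blast
    then show False
      by (intro no_induced_P5[of "v 0" "v 1" "v 2" "v 3" "v 4"])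
        (auto simp: F5_eq P5_edges_def compl_edges_def)
  qed
  moreover have "\<not> has_induced V ?C F5 C5_edges"
  proof
    assume "has_induced V ?C F5 C5_edges"
    then obtain v where "\<forall>i\<in>F5. v i \<in> V" "distinct [v 0, v 1, v 2, v 3, v 4]"
      "\<forall>i\<in>F5. \<forall>j\<in>F5. i \<noteq> j \<longrightarrow> (C5_edges i j \<longleftrightarrow> \<not> E (v i) (v j))"
      using transfer by blast
    then show False
      by (intro no_induced_C5[of "v 0" "v 2" "v 4" "v 1" "v 3"])
        (auto simp: F5_eq C5_edges_def P5_edges_def)
  qed
  moreover have "\<not> has_induced V ?C F5 bull_edges"
  proof
    assume "has_induced V ?C F5 bull_edges"
    then obtain v where "\<forall>i\<in>F5. v i \<in> V" "distinct [v 0, v 1, v 2, v 3, v 4]"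
      "\<forall>i\<in>F5. \<forall>j\<in>F5. i \<noteq> j \<longrightarrow> (bull_edges i j \<longleftrightarrow> \<not> E (v i) (v j))"
      using transfer by blast
    then show False
      by (intro no_induced_bull[of "v 4" "v 3" "v 2" "v 0" "v 1"])
        (auto simp: F5_eq bull_edges_def insert_commute doubleton_eq_iff)
  qed
  ultimately show ?thesis unfolding free_P5_coP5_C5_bull_def by blast
qed

lemma forbidden_free_compl: "forbidden_free V (compl_edges V E)"
  using graph_compl_edges[OF graph] compl_edges_free unfolding forbidden_free_def by blast

end

section \<open>Prime graphs contain an induced \<open>P\<^sub>4\<close>\<close>

definition induced_P4 :: "'a set \<Rightarrow> ('a \<Rightarrow> 'a \<Rightarrow> bool) \<Rightarrow> 'a \<Rightarrow> 'a \<Rightarrow> 'a \<Rightarrow> 'a \<Rightarrow> bool" where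
  "induced_P4 V E w1 w2 w3 w4 \<longleftrightarrow> w1 \<in> V \<and> w2 \<in> V \<and> w3 \<in> V \<and> w4 \<in> V \<and> distinct [w1,w2,w3,w4] \<and>
     E w1 w2 \<and> E w2 w3 \<and> E w3 w4 \<and> \<not> E w1 w3 \<and> \<not> E w1 w4 \<and> \<not> E w2 w4"

lemma induced_P4_compl_edges:
  assumes "induced_P4 V (compl_edges V E) w1 w2 w3 w4" "graph V E"
  shows "induced_P4 V E w2 w4 w1 w3"
  using assms unfolding induced_P4_def compl_edges_def graph_def by auto

locale P4_free_prime =
  fixes V :: "'a set" and E :: "'a \<Rightarrow> 'a \<Rightarrow> bool"
  assumes graph: "graph V E" and prime: "prime_graph V E"
    and P4_free: "\<not> induced_P4 V E w1 w2 w3 w4"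
begin

lemma P4_free_prime_compl: "P4_free_prime V (compl_edges V E)"
  using graph_compl_edges[OF graph] prime_graph_compl_edges[OF prime]
    induced_P4_compl_edges[OF _ graph] P4_free
  unfolding P4_free_prime_def by blast

lemma neighbour_agrees_on_edge_of_non_neighbours:
  assumes "v \<in> V" "x \<in> V" "y \<in> V" "x \<noteq> v" "y \<noteq> v" "\<not> E v x" "\<not> E v y" "E x y"
    and "E v u"
  shows "E u x \<longleftrightarrow> E u y"
  using P4_free[of v u x y] P4_free[of v u y x] assms graphD[OF graph] by (auto simp: induced_P4_def)

text \<open>Otherwise the non-neighbours of \<open>v\<close> that look like \<open>p\<close> from the neighbourhood of \<open>v\<close>
  form a homogeneous set.\<close>
lemma non_neighbours_stable:
  assumes v: "v \<in> V" and p: "p \<in> V" "p \<noteq> v" "\<not> E v p" and q: "q \<in> V" "q \<noteq> v" "\<not> E v q"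
  shows "\<not> E p q"
proof
  assume pq: "E p q"
  define C where "C = {x\<in>V. x \<noteq> v \<and> \<not> E v x \<and> (\<forall>u. E v u \<longrightarrow> E u x \<longleftrightarrow> E u p)}"
  have "{p, q} \<subseteq> C"
    using p q neighbour_agrees_on_edge_of_non_neighbours[OF v p(1) q(1) p(2) q(2) p(3) q(3) pq]
    unfolding C_def by auto
  moreover have "finite C" using graphD(1)[OF graph] unfolding C_def by auto
  moreover have "p \<noteq> q" using pq graphD(5)[OF graph] by auto
  ultimately have "2 \<le> card C" by (metis card_2_iff card_mono)
  show False
  proof (rule prime_graph_no_homogeneous_set[OF prime graph _ \<open>2 \<le> card C\<close>])
    show "C \<subseteq> V" "C \<noteq> V" using v unfolding C_def by auto
    fix b assume b: "b \<in> V - C"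
    show "(\<forall>x\<in>C. E b x) \<or> (\<forall>x\<in>C. \<not> E b x)"
    proof (cases "b = v \<or> E v b")
      case True thus ?thesis unfolding C_def by auto
    next
      case False
      have "\<not> E b x" if "x \<in> C" for x
      proof
        assume "E b x"
        then have "E u b \<longleftrightarrow> E u p" if "E v u" for u
          using neighbour_agrees_on_edge_of_non_neighbours[of v b x u] that \<open>x \<in> C\<close> b False v
          unfolding C_def by auto
        then show False using b False unfolding C_def by auto
      qed
      thus ?thesis by auto
    qed
  qed
qed

lemma neighbours_clique:
  assumes "v \<in> V" "x \<in> V" "y \<in> V" "E v x" "E v y" "x \<noteq> y"
  shows "E x y"
proof -
  interpret C: P4_free_prime V "compl_edges V E" by (rule P4_free_prime_compl)
  have "\<not> compl_edges V E x y"
    by (rule C.non_neighbours_stable[of v]) (use assms graphD[OF graph] in \<open>auto simp: compl_edges_def\<close>)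
  thus ?thesis using assms unfolding compl_edges_def by auto
qed

lemma nested_neighbourhoods:
  assumes v: "v \<in> V" and p: "p \<in> V" "p \<noteq> v" "\<not> E v p" and q: "q \<in> V" "q \<noteq> v" "\<not> E v q"
  shows "{u. E v u \<and> E u p} \<subseteq> {u. E v u \<and> E u q} \<or> {u. E v u \<and> E u q} \<subseteq> {u. E v u \<and> E u p}"
proof (rule ccontr)
  assume "\<not> ?thesis"
  then obtain x y where x: "E v x" "E x p" "\<not> E x q" and y: "E v y" "E y q" "\<not> E y p" by blast
  have "E x y" using neighbours_clique[OF v, of x y] x y graphD[OF graph] by metis
  moreover have "\<not> E p q" by (rule non_neighbours_stable[OF v p q])
  moreover have "x \<noteq> y" "p \<noteq> q" "x \<noteq> p" "x \<noteq> q" "y \<noteq> p" "y \<noteq> q"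
    using x y p q graphD(5)[OF graph] by auto
  ultimately have "induced_P4 V E p x y q"
    using x y p q graphD[OF graph] unfolding induced_P4_def by auto
  thus False using P4_free by blast
qed

lemma neighbour_has_non_neighbour_neighbour:
  assumes v: "v \<in> V" and u: "E v u"
  shows "\<exists>p. p \<in> V \<and> p \<noteq> v \<and> \<not> E v p \<and> E u p"
proof (rule ccontr)
  assume none: "\<not> ?thesis"
  define W where "W = {v, u}"
  have "card W \<le> 2" unfolding W_def by (simp add: card_insert_if)
  then have "W \<noteq> V" using prime unfolding prime_graph_def by auto
  show False
  proof (rule prime_graph_no_homogeneous_set[OF prime graph, of W])
    show "W \<subseteq> V" "2 \<le> card W" using v u graphD[OF graph] unfolding W_def by (auto simp: card_insert_if)
    show "W \<noteq> V" by fact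
    fix b assume b: "b \<in> V - W"
    show "(\<forall>x\<in>W. E b x) \<or> (\<forall>x\<in>W. \<not> E b x)"
      using b none neighbours_clique[OF v, of b u] graphD[OF graph] u
      unfolding W_def by auto
  qed
qed

lemma contradiction: False
proof -
  have "card V \<ge> 4" using prime unfolding prime_graph_def by auto
  then obtain v where v: "v \<in> V" by fastforce
  define B where "B = {p\<in>V. p \<noteq> v \<and> \<not> E v p}"
  define N where "N p = {u. E v u \<and> E u p}" for p
  have finB: "finite B" and finN: "finite (N p)" for p
    using graphD[OF graph] unfolding B_def N_def by (auto intro: finite_subset[of _ V])
  have "B \<noteq> {}"
  proof
    assume "B = {}"
    show False
    proof (rule prime_graph_no_homogeneous_set[OF prime graph, of "V - {v}"])
      show "V - {v} \<subseteq> V" "V - {v} \<noteq> V" using v by auto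
      show "2 \<le> card (V - {v})" using \<open>card V \<ge> 4\<close> v graphD(1)[OF graph] by auto
      show "(\<forall>x\<in>V - {v}. E b x) \<or> (\<forall>x\<in>V - {v}. \<not> E b x)" if "b \<in> V - (V - {v})" for b
        using that \<open>B = {}\<close> unfolding B_def by auto
    qed
  qed
  then have "Max ((\<lambda>q. card (N q)) ` B) \<in> (\<lambda>q. card (N q)) ` B" using finB by simp
  then obtain p where p: "p \<in> B" and "card (N p) = Max ((\<lambda>q. card (N q)) ` B)" by auto
  then have p_max: "card (N q) \<le> card (N p)" if "q \<in> B" for q using that finB by simp
  have all_neighbours: "E u p" if u: "E v u" for u
  proof -
    obtain q where "q \<in> B" "E u q"
      using neighbour_has_non_neighbour_neighbour[OF v u] unfolding B_def by auto
    moreover have "N q \<subseteq> N p"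
    proof -
      have "N p \<subseteq> N q \<or> N q \<subseteq> N p"
        using nested_neighbourhoods[OF v, of p q] p \<open>q \<in> B\<close> unfolding B_def N_def by auto
      then show ?thesis using card_seteq[OF finN] p_max[OF \<open>q \<in> B\<close>] by blast
    qed
    ultimately show ?thesis using u unfolding N_def by auto
  qed
  show False
  proof (rule prime_graph_no_homogeneous_set[OF prime graph, of "{v, p}"])
    show "{v, p} \<subseteq> V" "2 \<le> card {v, p}" using v p unfolding B_def by auto
    have "card {v, p} \<le> 2" by (simp add: card_insert_if)
    then show "{v, p} \<noteq> V" using \<open>card V \<ge> 4\<close> by auto
    fix b assume b: "b \<in> V - {v, p}"
    show "(\<forall>x\<in>{v, p}. E b x) \<or> (\<forall>x\<in>{v, p}. \<not> E b x)"
    proof (cases "E v b")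
      case True
      then show ?thesis using all_neighbours graphD(4)[OF graph] by blast
    next
      case False
      then show ?thesis
        using non_neighbours_stable[OF v, of b p] b p graphD(4)[OF graph] unfolding B_def by auto
    qed
  qed
qed

end

lemma prime_graph_has_induced_P4:
  assumes "graph V E" "prime_graph V E"
  obtains w1 w2 w3 w4 where "induced_P4 V E w1 w2 w3 w4"
  using P4_free_prime.contradiction assms unfolding P4_free_prime_def by blast

section \<open>The trace of an outside vertex on a half graph\<close>

text \<open>The trace of a vertex outside a half graph \<open>a\<^sub>1 \<dots> a\<^sub>k, c\<^sub>1 \<dots> c\<^sub>k\<close> (with \<open>a\<^sub>u c\<^sub>v\<close> an
  edge iff \<open>v \<le> u\<close>): \<open>p u\<close> and \<open>q v\<close> record adjacency to \<open>a\<^sub>u\<close> and \<open>c\<^sub>v\<close>. The hypotheses are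
  what excluding \<open>P\<^sub>5\<close>, its complement, \<open>C\<^sub>5\<close> and the bull yields on five vertices.\<close>
context
  fixes p q :: "nat \<Rightarrow> bool" and k :: nat
  assumes ends_or: "\<And>x u v y. 1 \<le> x \<Longrightarrow> x \<le> u \<Longrightarrow> u < v \<Longrightarrow> v \<le> y \<Longrightarrow> y \<le> k \<Longrightarrow>
      p u \<or> q v \<Longrightarrow> q x \<or> p y"
    and ends_and: "\<And>x u v y. 1 \<le> x \<Longrightarrow> x \<le> u \<Longrightarrow> u < v \<Longrightarrow> v \<le> y \<Longrightarrow> y \<le> k \<Longrightarrow>
      p u \<Longrightarrow> q v \<Longrightarrow> q x \<and> p y"
    and middle_or: "\<And>x u v y. 1 \<le> x \<Longrightarrow> x \<le> u \<Longrightarrow> u < v \<Longrightarrow> v \<le> y \<Longrightarrow> y \<le> k \<Longrightarrow>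
      q x \<Longrightarrow> p y \<Longrightarrow> p u \<or> q v"
    and bull_p: "\<And>U P P' W. 1 \<le> U \<Longrightarrow> U \<le> P \<Longrightarrow> U \<le> P' \<Longrightarrow> P' < W \<Longrightarrow> P < W \<Longrightarrow> W \<le> k \<Longrightarrow>
      q U \<Longrightarrow> p P \<Longrightarrow> \<not> p P' \<Longrightarrow> q W \<Longrightarrow> False"
    and bull_q: "\<And>Y Q Q' U. 1 \<le> U \<Longrightarrow> U < Q \<Longrightarrow> U < Q' \<Longrightarrow> Q \<le> Y \<Longrightarrow> Q' \<le> Y \<Longrightarrow> Y \<le> k \<Longrightarrow>
      p Y \<Longrightarrow> q Q \<Longrightarrow> \<not> q Q' \<Longrightarrow> p U \<Longrightarrow> False"
begin

lemma trace_without_q: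
  assumes "\<forall>v\<in>{1..k}. \<not> q v" "\<exists>u\<in>{1..k}. p u"
  shows "\<exists>t\<in>{1..k}. \<forall>u\<in>{1..k}. (p u \<longleftrightarrow> t \<le> u) \<and> (q u \<longrightarrow> u = t)"
proof -
  define t where "t = Min {v\<in>{1..k}. p v}"
  have fin: "finite {v\<in>{1..k}. p v}" "{v\<in>{1..k}. p v} \<noteq> {}" using assms(2) by auto
  have t: "t \<in> {1..k}" "p t" using Min_in[OF fin] unfolding t_def by auto
  have "p u \<longleftrightarrow> t \<le> u" if u: "u \<in> {1..k}" for u
  proof
    assume "p u" thus "t \<le> u" using Min_le[OF fin(1)] u unfolding t_def by auto
  next
    assume "t \<le> u"
    then show "p u" using ends_or[of t t u u] t u assms(1) by (cases "t = u") auto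
  qed
  thus ?thesis using assms(1) t by blast
qed

lemma trace_without_p:
  assumes "\<forall>u\<in>{1..k}. \<not> p u" "\<exists>v\<in>{1..k}. q v"
  shows "\<exists>t\<in>{1..k}. \<forall>u\<in>{1..k}. (p u \<longrightarrow> u = t) \<and> (q u \<longleftrightarrow> u \<le> t)"
proof -
  define t where "t = Max {v\<in>{1..k}. q v}"
  have fin: "finite {v\<in>{1..k}. q v}" "{v\<in>{1..k}. q v} \<noteq> {}" using assms(2) by auto
  have t: "t \<in> {1..k}" "q t" using Max_in[OF fin] unfolding t_def by auto
  have "q u \<longleftrightarrow> u \<le> t" if u: "u \<in> {1..k}" for u
  proof
    assume "q u" thus "u \<le> t" using Max_ge[OF fin(1)] u unfolding t_def by auto
  next
    assume "u \<le> t"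
    then show "q u" using ends_or[of u u t t] t u assms(1) by (cases "u = t") auto
  qed
  thus ?thesis using assms(1) t by blast
qed

lemma trace_common_point:
  assumes "u0 \<in> {1..k}" "p u0" "v0 \<in> {1..k}" "q v0"
  shows "\<exists>t\<in>{1..k}. p t \<and> q t"
proof (cases "u0 < v0")
  case True
  thus ?thesis using ends_and[of u0 u0 v0 v0] assms by auto
next
  case False
  thus ?thesis using middle_or[of v0 v0 u0 u0] assms by (cases "v0 = u0") auto
qed

lemma trace_ends_or_through:
  assumes "t \<in> {1..k}" "p t" "q t" "1 \<le> x" "x \<le> t" "t \<le> y" "y \<le> k" "x < y"
  shows "q x \<or> p y"
  using ends_or[of x x t y] assms by (cases "x < t") auto

lemma trace_gap_above:
  assumes t: "t \<in> {1..k}" "p t" "q t" and y0: "y0 \<in> {1..k}" "t < y0" "\<not> p y0"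
  shows "\<forall>u\<in>{1..k}. (p u \<longrightarrow> u = t) \<and> (q u \<longleftrightarrow> u \<le> t)"
proof
  fix u assume u: "u \<in> {1..k}"
  have q_below: "q u" if "u \<le> t" using trace_ends_or_through[OF t, of u y0] that u y0 by auto
  have no_q_above: "\<not> q u" if "t < u"
  proof
    assume "q u"
    show False
    proof (cases "y0 < u")
      case True
      show False using bull_p[of t t y0 u] t y0 u that \<open>q u\<close> True by auto
    next
      case False
      show False using ends_and[of t t u y0] t y0 u that \<open>q u\<close> False by auto
    qed
  qed
  have no_p_below: "\<not> p u" if "u < t" using ends_and[of u u t y0] t y0 u that by auto
  have no_p_above: "\<not> p u" if "t < u"
  proof
    assume "p u"
    show False
    proof (cases "y0 < u")
      case True
      show False using middle_or[of t y0 u u] t y0 u that \<open>p u\<close> True no_q_above by auto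
    next
      case False
      then have "u < y0" using \<open>p u\<close> y0 by (cases "u = y0") auto
      show False using ends_or[of u u y0 y0] y0 u that \<open>p u\<close> \<open>u < y0\<close> no_q_above by auto
    qed
  qed
  show "(p u \<longrightarrow> u = t) \<and> (q u \<longleftrightarrow> u \<le> t)"
    using q_below no_q_above no_p_below no_p_above by (cases "u < t"; cases "t < u") auto
qed

lemma trace_gap_below:
  assumes t: "t \<in> {1..k}" "p t" "q t" and x0: "x0 \<in> {1..k}" "x0 < t" "\<not> q x0"
  shows "\<forall>u\<in>{1..k}. (p u \<longleftrightarrow> t \<le> u) \<and> (q u \<longrightarrow> u = t)"
proof
  fix u assume u: "u \<in> {1..k}"
  have p_above: "p u" if "t \<le> u" using trace_ends_or_through[OF t, of x0 u] that u x0 by auto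
  have no_p_below: "\<not> p u" if "u < t"
  proof
    assume "p u"
    show False
    proof (cases "u < x0")
      case True
      show False using bull_q[of u t x0 t] t x0 u that \<open>p u\<close> True by auto
    next
      case False
      show False using ends_and[of x0 u t t] t x0 u that \<open>p u\<close> False by auto
    qed
  qed
  have no_q_above: "\<not> q u" if "t < u" using ends_and[of x0 t u u] t x0 u that by auto
  have no_q_below: "\<not> q u" if "u < t"
  proof
    assume "q u"
    show False
    proof (cases "x0 < u")
      case True
      show False using ends_or[of x0 x0 u u] x0 u that \<open>q u\<close> True no_p_below by auto
    next
      case False
      then have "u < x0" using \<open>q u\<close> x0 by (cases "u = x0") auto
      show False using middle_or[of u u x0 t] t x0 u that \<open>q u\<close> \<open>u < x0\<close> no_p_below by auto
    qed
  qed
  show "(p u \<longleftrightarrow> t \<le> u) \<and> (q u \<longrightarrow> u = t)"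
    using p_above no_p_below no_q_above no_q_below by (cases "u < t"; cases "t < u") auto
qed

lemma trace_with_all_p:
  assumes all_p: "\<forall>u\<in>{1..k}. p u" and t: "t \<in> {1..k}" "q t"
  shows "(\<forall>u\<in>{1..k}. p u \<and> q u) \<or>
    (\<exists>t\<in>{1..k}. \<forall>u\<in>{1..k}. (p u \<longleftrightarrow> t \<le> u) \<and> (q u \<longrightarrow> u = t))"
proof -
  define m where "m = Max {v\<in>{1..k}. q v}"
  have fin: "finite {v\<in>{1..k}. q v}" "{v\<in>{1..k}. q v} \<noteq> {}" using t by auto
  have m: "m \<in> {1..k}" "q m" using Max_in[OF fin] unfolding m_def by auto
  have q_iff: "q u \<longleftrightarrow> u \<le> m" if u: "u \<in> {1..k}" for u
    using Max_ge[OF fin(1)] ends_and[of u u m m] m u all_p unfolding m_def[symmetric]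
    by (cases "u = m") auto
  consider "m = k" | "m = 1" | "2 \<le> m" "m + 1 \<le> k" using m by fastforce
  then show ?thesis
  proof cases
    case 1 thus ?thesis using all_p q_iff by auto
  next
    case 2 thus ?thesis using all_p q_iff m by auto
  next
    case 3
    then have "1 \<le> m - 1" "m - 1 < m" "m - 1 < m + 1" by auto
    then have False using bull_q[of "m - 1" m "m + 1" k] 3 all_p q_iff[of "m + 1"] m by auto
    then show ?thesis ..
  qed
qed

lemma trace_with_all_q:
  assumes all_q: "\<forall>u\<in>{1..k}. q u" and t: "t \<in> {1..k}" "p t"
  shows "(\<forall>u\<in>{1..k}. p u \<and> q u) \<or>
    (\<exists>t\<in>{1..k}. \<forall>u\<in>{1..k}. (p u \<longrightarrow> u = t) \<and> (q u \<longleftrightarrow> u \<le> t))"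
proof -
  define m where "m = Min {v\<in>{1..k}. p v}"
  have fin: "finite {v\<in>{1..k}. p v}" "{v\<in>{1..k}. p v} \<noteq> {}" using t by auto
  have m: "m \<in> {1..k}" "p m" using Min_in[OF fin] unfolding m_def by auto
  have p_iff: "p u \<longleftrightarrow> m \<le> u" if u: "u \<in> {1..k}" for u
    using Min_le[OF fin(1)] ends_and[of m m u u] m u all_q unfolding m_def[symmetric]
    by (cases "u = m") auto
  consider "m = 1" | "m = k" | "2 \<le> m" "m + 1 \<le> k" using m by fastforce
  then show ?thesis
  proof cases
    case 1 thus ?thesis using all_q p_iff by auto
  next
    case 2 thus ?thesis using all_q p_iff m by auto
  next
    case 3
    then have "1 \<le> m - 1" "m - 1 < m" "m - 1 < m + 1" "\<not> m \<le> m - 1" by auto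
    then have False using bull_p[of 1 m "m - 1" "m + 1"] 3 all_q p_iff[of "m - 1"] m by auto
    then show ?thesis ..
  qed
qed

lemma trace_with_common_point:
  assumes t: "t \<in> {1..k}" "p t" "q t"
  shows "(\<forall>u\<in>{1..k}. p u \<and> q u) \<or>
   (\<exists>t\<in>{1..k}. \<forall>u\<in>{1..k}. (p u \<longrightarrow> u = t) \<and> (q u \<longleftrightarrow> u \<le> t)) \<or>
   (\<exists>t\<in>{1..k}. \<forall>u\<in>{1..k}. (p u \<longleftrightarrow> t \<le> u) \<and> (q u \<longrightarrow> u = t))"
proof (cases "\<exists>y\<in>{1..k}. t < y \<and> \<not> p y")
  case True
  then obtain y where "y \<in> {1..k}" "t < y" "\<not> p y" by blast
  then show ?thesis using trace_gap_above[OF t] t(1) by (intro disjI2 disjI1 bexI)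
next
  case no_gap_above: False
  show ?thesis
  proof (cases "\<exists>x\<in>{1..k}. x < t \<and> \<not> q x")
    case True
    then obtain x where "x \<in> {1..k}" "x < t" "\<not> q x" by blast
    then show ?thesis using trace_gap_below[OF t] t(1) by (intro disjI2 bexI)
  next
    case no_gap_below: False
    have "(\<forall>u\<in>{1..k}. p u) \<or> (\<forall>u\<in>{1..k}. q u)"
    proof (rule ccontr)
      assume "\<not> ?thesis"
      then obtain x y where x: "x \<in> {1..k}" "\<not> p x" and y: "y \<in> {1..k}" "\<not> q y" by auto
      have "x < t"
      proof (rule ccontr)
        assume "\<not> x < t"
        then have "t < x \<or> t = x" by auto
        then show False using no_gap_above x t by blast
      qed
      have "t < y"
      proof (rule ccontr)
        assume "\<not> t < y"
        then have "y < t \<or> t = y" by auto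
        then show False using no_gap_below y t by blast
      qed
      have "q x" using no_gap_below x \<open>x < t\<close> by auto
      moreover have "p y" using no_gap_above y \<open>t < y\<close> by auto
      ultimately show False using middle_or[of x x y y] x y \<open>x < t\<close> \<open>t < y\<close> by auto
    qed
    then show ?thesis using trace_with_all_p[OF _ t(1,3)] trace_with_all_q[OF _ t(1,2)] by blast
  qed
qed

lemma chain_trace_cases:
  "(\<forall>u\<in>{1..k}. \<not> p u \<and> \<not> q u) \<or> (\<forall>u\<in>{1..k}. p u \<and> q u) \<or>
   (\<exists>t\<in>{1..k}. \<forall>u\<in>{1..k}. (p u \<longrightarrow> u = t) \<and> (q u \<longleftrightarrow> u \<le> t)) \<or>
   (\<exists>t\<in>{1..k}. \<forall>u\<in>{1..k}. (p u \<longleftrightarrow> t \<le> u) \<and> (q u \<longrightarrow> u = t))"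
proof -
  consider "\<forall>u\<in>{1..k}. \<not> p u \<and> \<not> q u"
    | "\<forall>v\<in>{1..k}. \<not> q v" "\<exists>u\<in>{1..k}. p u"
    | "\<forall>u\<in>{1..k}. \<not> p u" "\<exists>v\<in>{1..k}. q v"
    | t where "t \<in> {1..k}" "p t" "q t"
  proof (cases "(\<exists>u\<in>{1..k}. p u) \<and> (\<exists>v\<in>{1..k}. q v)")
    case True
    then obtain u v where "u \<in> {1..k}" "p u" "v \<in> {1..k}" "q v" by blast
    then show thesis using trace_common_point that(4) by blast
  next
    case False
    then show thesis using that(1-3) by blast
  qed
  then show ?thesis
  proof cases
    case 1
    then show ?thesis by blast
  next
    case 2
    then show ?thesis using trace_without_q[OF 2] by (intro disjI2) simp
  next
    case 3
    then show ?thesis using trace_without_p[OF 3] by (intro disjI2 disjI1) simp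
  next
    case 4
    show ?thesis using trace_with_common_point[OF 4] by (rule disjI2)
  qed
qed

end

section \<open>Induced half graphs\<close>

text \<open>\<open>a\<^sub>1 \<dots> a\<^sub>k, c\<^sub>1 \<dots> c\<^sub>k\<close> induce the half graph \<open>O\<^sub>k\<close>, with \<open>c\<^sub>v\<close> in the role
  of \<open>b\<^sub>k\<^sub>+\<^sub>1\<^sub>-\<^sub>v\<close>, so that \<open>a\<^sub>u c\<^sub>v\<close> is an edge iff \<open>v \<le> u\<close>.\<close>
definition half_chain :: "'a set \<Rightarrow> ('a \<Rightarrow> 'a \<Rightarrow> bool) \<Rightarrow> nat \<Rightarrow> (nat \<Rightarrow> 'a) \<Rightarrow> (nat \<Rightarrow> 'a) \<Rightarrow> bool" where
  "half_chain V E k a c \<longleftrightarrow> (\<forall>u\<in>{1..k}. a u \<in> V \<and> c u \<in> V) \<and> inj_on a {1..k} \<and> inj_on c {1..k} \<and>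
     (\<forall>u\<in>{1..k}. \<forall>v\<in>{1..k}. a u \<noteq> c v \<and> \<not> E (a u) (a v) \<and> \<not> E (c u) (c v) \<and> (E (a u) (c v) \<longleftrightarrow> v \<le> u))"

definition insert_at :: "(nat \<Rightarrow> 'a) \<Rightarrow> nat \<Rightarrow> 'a \<Rightarrow> nat \<Rightarrow> 'a" where
  "insert_at f p x i = (if i < p then f i else if i = p then x else f (i - 1))"

lemma insert_at_cases:
  assumes "u \<in> {1..k + 1}" "1 \<le> p" "p \<le> k + 1"
  obtains "u = p" "insert_at f p x u = x"
  | i where "i \<in> {1..k}" "u \<noteq> p" "insert_at f p x u = f i" "u = (if i < p then i else i + 1)"
proof (cases "u < p")
  case True
  then show ?thesis using assms that(2)[of u] unfolding insert_at_def by auto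
next
  case not_less: False
  show ?thesis
  proof (cases "u = p")
    case True
    then show ?thesis using that(1) unfolding insert_at_def by auto
  next
    case False
    then have "u - 1 \<in> {1..k}" "\<not> u - 1 < p" "u = u - 1 + 1" using not_less assms by auto
    then show ?thesis using that(2)[of "u - 1"] False not_less unfolding insert_at_def by auto
  qed
qed

lemma inj_on_insert_at:
  assumes inj: "inj_on f {1..k}" and x: "x \<notin> f ` {1..k}" and p: "1 \<le> p" "p \<le> k + 1"
  shows "inj_on (insert_at f p x) {1..k + 1}"
proof (rule inj_onI)
  fix u u' assume u: "u \<in> {1..k + 1}" and u': "u' \<in> {1..k + 1}"
    and eq: "insert_at f p x u = insert_at f p x u'"
  show "u = u'"
    by (cases rule: insert_at_cases[OF u p, of f x]; cases rule: insert_at_cases[OF u' p, of f x])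
      (use eq x inj_onD[OF inj] in auto)
qed

locale half_chain_graph = forbidden_free +
  fixes k :: nat and a :: "nat \<Rightarrow> 'a" and c :: "nat \<Rightarrow> 'a"
  assumes chain: "half_chain V E k a c"
begin

definition H :: "'a set" where "H = a ` {1..k} \<union> c ` {1..k}"

lemma half_chainD: "\<forall>u\<in>{1..k}. a u \<in> V \<and> c u \<in> V" "inj_on a {1..k}" "inj_on c {1..k}"
  "\<forall>u\<in>{1..k}. \<forall>v\<in>{1..k}. a u \<noteq> c v \<and> \<not> E (a u) (a v) \<and> \<not> E (c u) (c v) \<and> (E (a u) (c v) \<longleftrightarrow> v \<le> u)"
  using chain unfolding half_chain_def by blast+

lemma a_in_V: "1 \<le> u \<Longrightarrow> u \<le> k \<Longrightarrow> a u \<in> V" using half_chainD(1) by simp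
lemma c_in_V: "1 \<le> u \<Longrightarrow> u \<le> k \<Longrightarrow> c u \<in> V" using half_chainD(1) by simp
lemma a_eq_iff: "1 \<le> u \<Longrightarrow> u \<le> k \<Longrightarrow> 1 \<le> u' \<Longrightarrow> u' \<le> k \<Longrightarrow> a u = a u' \<longleftrightarrow> u = u'"
  using half_chainD(2) unfolding inj_on_def by (metis atLeastAtMost_iff)
lemma c_eq_iff: "1 \<le> u \<Longrightarrow> u \<le> k \<Longrightarrow> 1 \<le> u' \<Longrightarrow> u' \<le> k \<Longrightarrow> c u = c u' \<longleftrightarrow> u = u'"
  using half_chainD(3) unfolding inj_on_def by (metis atLeastAtMost_iff)
lemma a_neq_c: "1 \<le> u \<Longrightarrow> u \<le> k \<Longrightarrow> 1 \<le> v \<Longrightarrow> v \<le> k \<Longrightarrow> a u \<noteq> c v"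
  using half_chainD(4) by simp
lemma c_neq_a: "1 \<le> u \<Longrightarrow> u \<le> k \<Longrightarrow> 1 \<le> v \<Longrightarrow> v \<le> k \<Longrightarrow> c v \<noteq> a u"
  using a_neq_c by metis
lemma a_a_nonadj: "1 \<le> u \<Longrightarrow> u \<le> k \<Longrightarrow> 1 \<le> v \<Longrightarrow> v \<le> k \<Longrightarrow> \<not> E (a u) (a v)"
  using half_chainD(4) by simp
lemma c_c_nonadj: "1 \<le> u \<Longrightarrow> u \<le> k \<Longrightarrow> 1 \<le> v \<Longrightarrow> v \<le> k \<Longrightarrow> \<not> E (c u) (c v)"
  using half_chainD(4) by simp
lemma a_c_adj_iff: "1 \<le> u \<Longrightarrow> u \<le> k \<Longrightarrow> 1 \<le> v \<Longrightarrow> v \<le> k \<Longrightarrow> E (a u) (c v) \<longleftrightarrow> v \<le> u"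
  using half_chainD(4) by simp
lemma c_a_adj_iff: "1 \<le> u \<Longrightarrow> u \<le> k \<Longrightarrow> 1 \<le> v \<Longrightarrow> v \<le> k \<Longrightarrow> E (c v) (a u) \<longleftrightarrow> v \<le> u"
  using a_c_adj_iff[of u v] adj_commute[of "c v" "a u"] by simp

lemma a_in_H: "1 \<le> u \<Longrightarrow> u \<le> k \<Longrightarrow> a u \<in> H" unfolding H_def by auto
lemma c_in_H: "1 \<le> u \<Longrightarrow> u \<le> k \<Longrightarrow> c u \<in> H" unfolding H_def by auto
lemma H_cases: "x \<in> H \<Longrightarrow> (\<And>u. 1 \<le> u \<Longrightarrow> u \<le> k \<Longrightarrow> x = a u \<Longrightarrow> P) \<Longrightarrow> (\<And>u. 1 \<le> u \<Longrightarrow> u \<le> k \<Longrightarrow> x = c u \<Longrightarrow> P) \<Longrightarrow> P"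
  unfolding H_def by auto
lemma H_subset_V: "H \<subseteq> V" unfolding H_def using a_in_V c_in_V by auto
lemma not_in_H_neq: "z \<notin> H \<Longrightarrow> 1 \<le> u \<Longrightarrow> u \<le> k \<Longrightarrow> z \<noteq> a u \<and> z \<noteq> c u \<and> a u \<noteq> z \<and> c u \<noteq> z"
  using a_in_H c_in_H by blast

lemma outside_trace_constraints:
  assumes z: "z \<in> V" "z \<notin> H" and idx: "1 \<le> x" "x \<le> u" "u < v" "v \<le> y" "y \<le> k"
  shows "((E z (a u) \<or> E z (c v)) \<longrightarrow> (E z (c x) \<or> E z (a y))) \<and>
         ((E z (a u) \<and> E z (c v)) \<longrightarrow> (E z (c x) \<and> E z (a y))) \<and>
         ((E z (c x) \<and> E z (a y)) \<longrightarrow> (E z (a u) \<or> E z (c v)))"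
proof -
  have r: "1 \<le> u" "u \<le> k" "1 \<le> v" "v \<le> k" "1 \<le> y" "x \<le> k" using idx by auto
  have V5: "z \<in> V" "a u \<in> V" "c x \<in> V" "a y \<in> V" "c v \<in> V" using z idx a_in_V c_in_V by auto
  have ne: "a u \<noteq> a y" "c x \<noteq> c v" "a u \<noteq> c x" "a u \<noteq> c v" "a y \<noteq> c x" "a y \<noteq> c v"
    using a_eq_iff[of u y] c_eq_iff[of x v] a_neq_c[of u x] a_neq_c[of u v] a_neq_c[of y x] a_neq_c[of y v] idx by auto
  have nz: "z \<noteq> a u" "z \<noteq> c x" "z \<noteq> a y" "z \<noteq> c v"
    using not_in_H_neq[OF z(2), of u] not_in_H_neq[OF z(2), of x] not_in_H_neq[OF z(2), of y] not_in_H_neq[OF z(2), of v] idx by auto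
  have d: "distinct [z, a u, c x, a y, c v]"
    using ne nz by auto
  have hf: "E (a u) (c x)" "E (a y) (c x)" "E (a y) (c v)" "\<not> E (a u) (c v)"
    "\<not> E (a u) (a y)" "\<not> E (c x) (c v)"
    using a_c_adj_iff[of u x] a_c_adj_iff[of y x] a_c_adj_iff[of y v] a_c_adj_iff[of u v] a_a_nonadj[of u y] c_c_nonadj[of x v] idx by auto
  have hs: "E (c x) (a u)" "E (c x) (a y)" "E (c v) (a y)" "\<not> E (c v) (a u)"
    "\<not> E (a y) (a u)" "\<not> E (c v) (c x)" using hf adj_commute by auto
  have zs: "E (a u) z = E z (a u)" "E (c x) z = E z (c x)" "E (a y) z = E z (a y)" "E (c v) z = E z (c v)"
    using adj_commute by auto
  have P5_1: False if "E z (a u)" "\<not> E z (c x)" "\<not> E z (a y)" "\<not> E z (c v)"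
    by (rule no_induced_P5[OF V5 d(1)]) (use that hf hs zs V5 ne nz in \<open>simp_all\<close>)
  have P5_2: False if "\<not> E z (a u)" "\<not> E z (c x)" "\<not> E z (a y)" "E z (c v)"
    by (rule no_induced_P5[of "a u" "c x" "a y" "c v" z]) (use that hf hs zs V5 ne nz in \<open>simp_all\<close>)
  have C5: False if "E z (a u)" "\<not> E z (c x)" "\<not> E z (a y)" "E z (c v)"
    by (rule no_induced_C5[OF V5 d(1)]) (use that hf hs zs V5 ne nz in \<open>simp_all\<close>)
  have bull: False if "\<not> E z (a u)" "E z (c x)" "E z (a y)" "\<not> E z (c v)"
    by (rule no_induced_bull[of "c x" "a y" z "a u" "c v"]) (use that hf hs zs V5 ne nz in \<open>simp_all\<close>)
  have house_1: False if "E z (a u)" "E z (c x)" "\<not> E z (a y)" "E z (c v)"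
    by (rule no_induced_house[of "a u" z "c x" "a y" "c v"]) (use that hf hs zs V5 ne nz in \<open>simp_all\<close>)
  have house_2: False if "E z (a u)" "\<not> E z (c x)" "E z (a y)" "E z (c v)"
    by (rule no_induced_house[of "c v" "a y" z "a u" "c x"]) (use that hf hs zs V5 ne nz in \<open>simp_all\<close>)
  show ?thesis using P5_1 P5_2 C5 bull house_1 house_2 by blast
qed


lemma outside_no_bull_a:
  assumes z: "z \<in> V" "z \<notin> H"
    and idx: "1 \<le> U" "U \<le> P" "U \<le> P'" "P' < W" "P < W" "W \<le> k"
    and h: "E z (c U)" "E z (a P)" "\<not> E z (a P')" "E z (c W)"
  shows False
proof -
  have ne: "c U \<noteq> c W" "a P \<noteq> a P'" "a P \<noteq> c U" "a P \<noteq> c W" "a P' \<noteq> c U" "a P' \<noteq> c W"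
    using c_eq_iff[of U W] h(2,3) a_neq_c[of P U] a_neq_c[of P W] a_neq_c[of P' U] a_neq_c[of P' W] idx by auto
  have nz: "z \<noteq> c U" "z \<noteq> a P" "z \<noteq> a P'" "z \<noteq> c W"
    using not_in_H_neq[OF z(2), of U] not_in_H_neq[OF z(2), of P] not_in_H_neq[OF z(2), of P'] not_in_H_neq[OF z(2), of W] idx by auto
  have hf: "E (c U) (a P)" "E (c U) (a P')" "\<not> E (c U) (c W)" "\<not> E (a P) (a P')" "\<not> E (a P) (c W)"
    "\<not> E (a P') (c W)"
    using c_a_adj_iff[of P U] c_a_adj_iff[of P' U] c_c_nonadj[of U W] a_a_nonadj[of P P'] a_c_adj_iff[of P W] a_c_adj_iff[of P' W] idx by auto
  have zs: "E (c U) z = E z (c U)" using adj_commute by auto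
  show False
    by (rule no_induced_bull[of "c U" z "a P" "a P'" "c W"]) (use z idx h hf zs ne nz a_in_V c_in_V in \<open>simp_all\<close>)
qed

lemma outside_no_bull_c:
  assumes z: "z \<in> V" "z \<notin> H"
    and idx: "1 \<le> U" "U < Q" "U < Q'" "Q \<le> Y" "Q' \<le> Y" "Y \<le> k"
    and h: "E z (a Y)" "E z (c Q)" "\<not> E z (c Q')" "E z (a U)"
  shows False
proof -
  have ne: "a Y \<noteq> a U" "c Q \<noteq> c Q'" "a Y \<noteq> c Q" "a Y \<noteq> c Q'" "a U \<noteq> c Q" "a U \<noteq> c Q'"
    using a_eq_iff[of Y U] h(2,3) a_neq_c[of Y Q] a_neq_c[of Y Q'] a_neq_c[of U Q] a_neq_c[of U Q'] idx by auto
  have nz: "z \<noteq> a Y" "z \<noteq> c Q" "z \<noteq> c Q'" "z \<noteq> a U"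
    using not_in_H_neq[OF z(2), of Y] not_in_H_neq[OF z(2), of Q] not_in_H_neq[OF z(2), of Q'] not_in_H_neq[OF z(2), of U] idx by auto
  have hf: "E (a Y) (c Q)" "E (a Y) (c Q')" "\<not> E (a Y) (a U)" "\<not> E (c Q) (c Q')" "\<not> E (c Q) (a U)"
    "\<not> E (c Q') (a U)"
    using a_c_adj_iff[of Y Q] a_c_adj_iff[of Y Q'] a_a_nonadj[of Y U] c_c_nonadj[of Q Q'] c_a_adj_iff[of U Q] c_a_adj_iff[of U Q'] idx by auto
  have zs: "E (a Y) z = E z (a Y)" using adj_commute by auto
  show False
    by (rule no_induced_bull[of "a Y" z "c Q" "c Q'" "a U"]) (use z idx h hf zs ne nz a_in_V c_in_V in \<open>simp_all\<close>)
qed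

definition twin :: "'a \<Rightarrow> 'a \<Rightarrow> bool" where "twin z h \<longleftrightarrow> z \<in> V - H \<and> h \<in> H \<and> (\<forall>w\<in>H - {h}. E z w \<longleftrightarrow> E h w)"

lemma outside_trace_cases:
  assumes z: "z \<in> V" "z \<notin> H"
  shows "(\<forall>u\<in>{1..k}. \<not> E z (a u) \<and> \<not> E z (c u)) \<or> (\<forall>u\<in>{1..k}. E z (a u) \<and> E z (c u)) \<or>
    (\<exists>t\<in>{1..k}. \<forall>u\<in>{1..k}. (E z (a u) \<longrightarrow> u = t) \<and> (E z (c u) \<longleftrightarrow> u \<le> t)) \<or>
    (\<exists>t\<in>{1..k}. \<forall>u\<in>{1..k}. (E z (a u) \<longleftrightarrow> t \<le> u) \<and> (E z (c u) \<longrightarrow> u = t))"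
proof (rule chain_trace_cases)
  fix x u v y assume "1 \<le> x" "x \<le> u" "u < v" "v \<le> y" "y \<le> k" "E z (a u) \<or> E z (c v)"
  thus "E z (c x) \<or> E z (a y)" using outside_trace_constraints[OF z, of x u v y] by blast
next
  fix x u v y assume "1 \<le> x" "x \<le> u" "u < v" "v \<le> y" "y \<le> k" "E z (a u)" "E z (c v)"
  thus "E z (c x) \<and> E z (a y)" using outside_trace_constraints[OF z, of x u v y] by blast
next
  fix x u v y assume "1 \<le> x" "x \<le> u" "u < v" "v \<le> y" "y \<le> k" "E z (c x)" "E z (a y)"
  thus "E z (a u) \<or> E z (c v)" using outside_trace_constraints[OF z, of x u v y] by blast
next
  fix U P P' W assume "1 \<le> U" "U \<le> P" "U \<le> P'" "P' < W" "P < W" "W \<le> k"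
    "E z (c U)" "E z (a P)" "\<not> E z (a P')" "E z (c W)"
  thus False using outside_no_bull_a[OF z] by blast
next
  fix U Q Q' Y assume "1 \<le> U" "U < Q" "U < Q'" "Q \<le> Y" "Q' \<le> Y" "Y \<le> k"
    "E z (a Y)" "E z (c Q)" "\<not> E z (c Q')" "E z (a U)"
  thus False using outside_no_bull_c[OF z] by blast
qed

lemma twin_a_if_trace:
  assumes z: "z \<in> V" "z \<notin> H" and t: "1 \<le> t" "t \<le> k"
    and trace: "\<forall>u\<in>{1..k}. (E z (a u) \<longrightarrow> u = t) \<and> (E z (c u) \<longleftrightarrow> u \<le> t)"
  shows "twin z (a t)"
  unfolding twin_def
proof (intro conjI ballI)
  show "z \<in> V - H" "a t \<in> H" using z a_in_H t by auto
  fix w assume w: "w \<in> H - {a t}"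
  then have "w \<in> H" by simp
  then show "E z w \<longleftrightarrow> E (a t) w"
  proof (rule H_cases)
    fix u assume "1 \<le> u" "u \<le> k" "w = a u"
    then show ?thesis using w trace a_a_nonadj[of t u] t by auto
  next
    fix u assume "1 \<le> u" "u \<le> k" "w = c u"
    then show ?thesis using trace a_c_adj_iff[of t u] t by auto
  qed
qed

lemma twin_c_if_trace:
  assumes z: "z \<in> V" "z \<notin> H" and t: "1 \<le> t" "t \<le> k"
    and trace: "\<forall>u\<in>{1..k}. (E z (a u) \<longleftrightarrow> t \<le> u) \<and> (E z (c u) \<longrightarrow> u = t)"
  shows "twin z (c t)"
  unfolding twin_def
proof (intro conjI ballI)
  show "z \<in> V - H" "c t \<in> H" using z c_in_H t by auto
  fix w assume w: "w \<in> H - {c t}"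
  then have "w \<in> H" by simp
  then show "E z w \<longleftrightarrow> E (c t) w"
  proof (rule H_cases)
    fix u assume "1 \<le> u" "u \<le> k" "w = a u"
    then show ?thesis using trace c_a_adj_iff[of u t] t by auto
  next
    fix u assume "1 \<le> u" "u \<le> k" "w = c u"
    then show ?thesis using w trace c_c_nonadj[of t u] t by auto
  qed
qed

lemma outside_vertex_cases:
  assumes z: "z \<in> V" "z \<notin> H"
  shows "(\<forall>w\<in>H. E z w) \<or> (\<forall>w\<in>H. \<not> E z w) \<or> (\<exists>h. twin z h)"
  using outside_trace_cases[OF z]
proof (elim disjE bexE)
  assume "\<forall>u\<in>{1..k}. \<not> E z (a u) \<and> \<not> E z (c u)"
  then have "\<forall>w\<in>H. \<not> E z w" by (metis H_cases atLeastAtMost_iff)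
  then show ?thesis by blast
next
  assume "\<forall>u\<in>{1..k}. E z (a u) \<and> E z (c u)"
  then have "\<forall>w\<in>H. E z w" by (metis H_cases atLeastAtMost_iff)
  then show ?thesis by blast
next
  fix t assume "t \<in> {1..k}" "\<forall>u\<in>{1..k}. (E z (a u) \<longrightarrow> u = t) \<and> (E z (c u) \<longleftrightarrow> u \<le> t)"
  then show ?thesis using twin_a_if_trace[OF z] by auto
next
  fix t assume "t \<in> {1..k}" "\<forall>u\<in>{1..k}. (E z (a u) \<longleftrightarrow> t \<le> u) \<and> (E z (c u) \<longrightarrow> u = t)"
  then show ?thesis using twin_c_if_trace[OF z] by auto
qed


lemma H_vertex_has_neighbour:
  assumes "1 \<le> k" "h \<in> H" shows "\<exists>w\<in>H. E h w"
  using assms(2)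
proof (rule H_cases)
  fix u assume u: "1 \<le> u" "u \<le> k" "h = a u"
  thus ?thesis using c_in_H[of 1] a_c_adj_iff[of u 1] assms(1) by auto
next
  fix u assume u: "1 \<le> u" "u \<le> k" "h = c u"
  thus ?thesis using a_in_H[of k] c_a_adj_iff[of k u] assms(1) by auto
qed

lemma H_vertex_has_non_neighbour:
  assumes "2 \<le> k" "h \<in> H" shows "\<exists>w\<in>H - {h}. \<not> E h w"
  using assms(2)
proof (rule H_cases)
  fix u assume u: "1 \<le> u" "u \<le> k" "h = a u"
  define i where "i = (if u = 1 then 2 else (1::nat))"
  have i: "1 \<le> i" "i \<le> k" "i \<noteq> u" using u assms(1) unfolding i_def by auto
  thus ?thesis using u a_in_H[OF i(1,2)] a_a_nonadj[of u i] a_eq_iff[of u i] by auto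
next
  fix u assume u: "1 \<le> u" "u \<le> k" "h = c u"
  define i where "i = (if u = 1 then 2 else (1::nat))"
  have i: "1 \<le> i" "i \<le> k" "i \<noteq> u" using u assms(1) unfolding i_def by auto
  thus ?thesis using u c_in_H[OF i(1,2)] c_c_nonadj[of u i] c_eq_iff[of u i] by auto
qed

lemma no_H_vertex_adjacent_to_all_but_one:
  assumes "3 \<le> k" "g \<in> H" "h \<in> H" "\<forall>w\<in>H - {g, h}. E g w"
  shows False
proof -
  have two: "\<exists>i1 i2. 1 \<le> i1 \<and> i1 \<le> k \<and> 1 \<le> i2 \<and> i2 \<le> k \<and> i1 \<noteq> i2 \<and> i1 \<noteq> u \<and> i2 \<noteq> u" for u :: nat
  proof (cases "u = 1")
    case True thus ?thesis using assms(1) by (intro exI[of _ 2] exI[of _ 3]) auto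
  next
    case False
    show ?thesis
    proof (cases "u = 2")
      case True thus ?thesis using assms(1) by (intro exI[of _ 1] exI[of _ 3]) auto
    next
      case False
      thus ?thesis using assms(1) \<open>u \<noteq> 1\<close> by (intro exI[of _ 1] exI[of _ 2]) auto
    qed
  qed
  show False using assms(2)
  proof (rule H_cases)
    fix u assume u: "1 \<le> u" "u \<le> k" "g = a u"
    obtain i1 i2 where i: "1 \<le> i1" "i1 \<le> k" "1 \<le> i2" "i2 \<le> k" "i1 \<noteq> i2" "i1 \<noteq> u" "i2 \<noteq> u"
      using two[of u] by blast
    have "a i1 \<noteq> a i2" "a i1 \<noteq> a u" "a i2 \<noteq> a u" using a_eq_iff i u by auto
    hence "a i1 \<in> H - {g, h} \<or> a i2 \<in> H - {g, h}" using a_in_H i u by auto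
    thus False using assms(4) a_a_nonadj[of u i1] a_a_nonadj[of u i2] u i by auto
  next
    fix u assume u: "1 \<le> u" "u \<le> k" "g = c u"
    obtain i1 i2 where i: "1 \<le> i1" "i1 \<le> k" "1 \<le> i2" "i2 \<le> k" "i1 \<noteq> i2" "i1 \<noteq> u" "i2 \<noteq> u"
      using two[of u] by blast
    have "c i1 \<noteq> c i2" "c i1 \<noteq> c u" "c i2 \<noteq> c u" using c_eq_iff i u by auto
    hence "c i1 \<in> H - {g, h} \<or> c i2 \<in> H - {g, h}" using c_in_H i u by auto
    thus False using assms(4) c_c_nonadj[of u i1] c_c_nonadj[of u i2] u i by auto
  qed
qed

lemma H_vertex_with_single_neighbour:
  assumes "g \<in> H" "h \<in> H" "E g h" "\<forall>w\<in>H - {g, h}. \<not> E g w"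
  shows "(g = a 1 \<and> h = c 1) \<or> (g = c k \<and> h = a k)"
  using assms(1)
proof (rule H_cases)
  fix u assume u: "1 \<le> u" "u \<le> k" "g = a u"
  have "u = 1"
  proof (rule ccontr)
    assume "u \<noteq> 1"
    hence "c 1 \<noteq> c 2" "c 1 \<noteq> g" "c 2 \<noteq> g" using c_eq_iff[of 1 2] c_neq_a u by auto
    hence "c 1 \<in> H - {g, h} \<or> c 2 \<in> H - {g, h}" using c_in_H u \<open>u \<noteq> 1\<close> by auto
    thus False using assms(4) a_c_adj_iff[of u 1] a_c_adj_iff[of u 2] u \<open>u \<noteq> 1\<close> by auto
  qed
  have "h = c 1" using assms(2)
  proof (rule H_cases)
    fix v assume "1 \<le> v" "v \<le> k" "h = a v"
    thus ?thesis using assms(3) a_a_nonadj[of u v] u by auto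
  next
    fix v assume "1 \<le> v" "v \<le> k" "h = c v"
    thus ?thesis using assms(3) a_c_adj_iff[of u v] u \<open>u = 1\<close> by auto
  qed
  thus ?thesis using u \<open>u = 1\<close> by auto
next
  fix u assume u: "1 \<le> u" "u \<le> k" "g = c u"
  have "u = k"
  proof (rule ccontr)
    assume "u \<noteq> k"
    hence "a k \<noteq> a (k - 1)" "a k \<noteq> g" "a (k - 1) \<noteq> g" using a_eq_iff[of k "k - 1"] a_neq_c u by auto
    have km: "1 \<le> k - 1" "u \<le> k - 1" "k - 1 \<le> k" using u \<open>u \<noteq> k\<close> by auto
    have "a k \<in> H - {g, h} \<or> a (k - 1) \<in> H - {g, h}" using a_in_H[of k] a_in_H[OF km(1,3)] u \<open>a k \<noteq> a (k - 1)\<close> \<open>a k \<noteq> g\<close> \<open>a (k - 1) \<noteq> g\<close> by auto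
    moreover have "E g (a k)" "E g (a (k - 1))" using c_a_adj_iff[of k u] c_a_adj_iff[OF km(1,3), of u] u km by auto
    ultimately show False using assms(4) by auto
  qed
  have "h = a k" using assms(2)
  proof (rule H_cases)
    fix v assume "1 \<le> v" "v \<le> k" "h = a v"
    thus ?thesis using assms(3) c_a_adj_iff[of v u] u \<open>u = k\<close> by auto
  next
    fix v assume "1 \<le> v" "v \<le> k" "h = c v"
    thus ?thesis using assms(3) c_c_nonadj[of u v] u by auto
  qed
  thus ?thesis using u \<open>u = k\<close> by auto
qed

lemma a_c_distinguished:
  assumes "2 \<le> k" "1 \<le> u" "u \<le> k" "1 \<le> v" "v \<le> k"
  shows "\<exists>w\<in>H - {a u, c v}. E (a u) w \<noteq> E (c v) w"
proof (cases "v \<le> u")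
  case True
  show ?thesis
  proof (cases "2 \<le> u")
    case True
    define j where "j = (if v = 1 then 2 else (1::nat))"
    have j: "1 \<le> j" "j \<le> u" "j \<noteq> v" using True \<open>v \<le> u\<close> assms unfolding j_def by auto
    have "c j \<in> H - {a u, c v}" using c_in_H[of j] c_eq_iff[of j v] c_neq_a[of u j] j assms by auto
    moreover have "E (a u) (c j) \<noteq> E (c v) (c j)" using a_c_adj_iff[of u j] c_c_nonadj[of v j] j assms by auto
    ultimately show ?thesis by blast
  next
    case False
    hence "u = 1" "v = 1" using assms \<open>v \<le> u\<close> by auto
    have "a 2 \<in> H - {a u, c v}" using a_in_H[of 2] a_eq_iff[of 2 u] a_neq_c[of 2 v] assms \<open>u = 1\<close> by auto
    moreover have "E (a u) (a 2) \<noteq> E (c v) (a 2)" using a_a_nonadj[of u 2] c_a_adj_iff[of 2 v] assms \<open>u = 1\<close> \<open>v = 1\<close> by auto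
    ultimately show ?thesis by blast
  qed
next
  case False
  have "c 1 \<in> H - {a u, c v}" using c_in_H[of 1] c_eq_iff[of 1 v] c_neq_a[of u 1] assms False by auto
  moreover have "E (a u) (c 1) \<noteq> E (c v) (c 1)" using a_c_adj_iff[of u 1] c_c_nonadj[of v 1] assms False by auto
  ultimately show ?thesis by blast
qed

lemma H_vertices_distinguished:
  assumes "2 \<le> k" "h \<in> H" "h' \<in> H" "h \<noteq> h'"
  shows "\<exists>w\<in>H - {h, h'}. E h w \<noteq> E h' w"
  using assms(2)
proof (rule H_cases)
  fix u assume u: "1 \<le> u" "u \<le> k" "h = a u"
  show ?thesis using assms(3)
  proof (rule H_cases)
    fix u' assume u': "1 \<le> u'" "u' \<le> k" "h' = a u'"
    hence "u \<noteq> u'" using u assms(4) by auto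
    define m where "m = max u u'"
    have m: "1 \<le> m" "m \<le> k" using u u' unfolding m_def by auto
    have "c m \<in> H - {h, h'}" using c_in_H[OF m] c_neq_a u u' m by auto
    moreover have "E h (c m) \<noteq> E h' (c m)" using a_c_adj_iff[of u m] a_c_adj_iff[of u' m] u u' m \<open>u \<noteq> u'\<close>
      unfolding m_def by auto
    ultimately show ?thesis by blast
  next
    fix v assume v: "1 \<le> v" "v \<le> k" "h' = c v"
    thus ?thesis using a_c_distinguished[OF assms(1) u(1,2) v(1,2)] u by auto
  qed
next
  fix v assume v: "1 \<le> v" "v \<le> k" "h = c v"
  show ?thesis using assms(3)
  proof (rule H_cases)
    fix u assume u: "1 \<le> u" "u \<le> k" "h' = a u"
    obtain w where "w \<in> H - {a u, c v}" "E (a u) w \<noteq> E (c v) w" using a_c_distinguished[OF assms(1) u(1,2) v(1,2)] by blast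
    thus ?thesis using u v by auto
  next
    fix v' assume v': "1 \<le> v'" "v' \<le> k" "h' = c v'"
    hence "v \<noteq> v'" using v assms(4) by auto
    define m where "m = min v v'"
    have m: "1 \<le> m" "m \<le> k" using v v' unfolding m_def by auto
    have "a m \<in> H - {h, h'}" using a_in_H[OF m] a_neq_c v v' m by auto
    moreover have "E h (a m) \<noteq> E h' (a m)" using c_a_adj_iff[of m v] c_a_adj_iff[of m v'] v v' m \<open>v \<noteq> v'\<close>
      unfolding m_def by auto
    ultimately show ?thesis by blast
  qed
qed

lemma a_pair_agreeing_but_one:
  assumes u: "1 \<le> u" "u < u'" "u' \<le> k" and h: "h \<in> H" "h \<noteq> a u" "h \<noteq> a u'"
    and ag: "\<forall>w\<in>H - {h, a u, a u'}. E (a u) w \<longleftrightarrow> E (a u') w"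
  shows "u' = u + 1 \<and> h = c (u + 1)"
proof -
  have r: "1 \<le> u + 1" "u + 1 \<le> k" using u by auto
  have d1: "E (a u) (c (u+1)) \<noteq> E (a u') (c (u+1))" using a_c_adj_iff[of u "u+1"] a_c_adj_iff[of u' "u+1"] u by auto
  have "c (u+1) \<in> H" "c (u+1) \<noteq> a u" "c (u+1) \<noteq> a u'" using c_in_H[OF r] c_neq_a u r by auto
  hence hc: "h = c (u+1)" using ag d1 by blast
  have "u' = u + 1"
  proof (rule ccontr)
    assume "u' \<noteq> u + 1"
    hence r2: "1 \<le> u + 2" "u + 2 \<le> u'" using u by auto
    have d2: "E (a u) (c (u+2)) \<noteq> E (a u') (c (u+2))" using a_c_adj_iff[of u "u+2"] a_c_adj_iff[of u' "u+2"] u r2 by auto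
    have "c (u+2) \<in> H" "c (u+2) \<noteq> a u" "c (u+2) \<noteq> a u'" "c (u+2) \<noteq> h"
      using c_in_H[of "u+2"] c_neq_a[of u "u+2"] c_neq_a[of u' "u+2"] c_eq_iff[of "u+2" "u+1"] u r2 hc by auto
    thus False using ag d2 by blast
  qed
  thus ?thesis using hc by auto
qed

lemma c_pair_agreeing_but_one:
  assumes v: "1 \<le> v" "v < v'" "v' \<le> k" and h: "h \<in> H" "h \<noteq> c v" "h \<noteq> c v'"
    and ag: "\<forall>w\<in>H - {h, c v, c v'}. E (c v) w \<longleftrightarrow> E (c v') w"
  shows "v' = v + 1 \<and> h = a v"
proof -
  have d1: "E (c v) (a v) \<noteq> E (c v') (a v)" using c_a_adj_iff[of v v] c_a_adj_iff[of v v'] v by auto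
  have "a v \<in> H" "a v \<noteq> c v" "a v \<noteq> c v'" using a_in_H[of v] a_neq_c v by auto
  hence hc: "h = a v" using ag d1 by blast
  have "v' = v + 1"
  proof (rule ccontr)
    assume "v' \<noteq> v + 1"
    hence r2: "1 \<le> v + 1" "v + 2 \<le> v'" using v by auto
    have d2: "E (c v) (a (v+1)) \<noteq> E (c v') (a (v+1))" using c_a_adj_iff[of "v+1" v] c_a_adj_iff[of "v+1" v'] v r2 by auto
    have "a (v+1) \<in> H" "a (v+1) \<noteq> c v" "a (v+1) \<noteq> c v'" "a (v+1) \<noteq> h"
      using a_in_H[of "v+1"] a_neq_c[of "v+1" v] a_neq_c[of "v+1" v'] a_eq_iff[of "v+1" v] v r2 hc by auto
    thus False using ag d2 by blast
  qed
  thus ?thesis using hc by auto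
qed

lemma a_c_agreeing_but_one:
  assumes u: "1 \<le> u" "u \<le> k" and v: "1 \<le> v" "v \<le> k" and h: "h \<in> H"
    and ag: "\<forall>w\<in>H - {h, a u, c v}. E (a u) w \<longleftrightarrow> E (c v) w"
  shows "k \<le> 2 \<and> u = v"
proof -
  have two_distinguishers: False
    if "w1 \<in> H - {a u, c v}" "w2 \<in> H - {a u, c v}" "w1 \<noteq> w2"
      "E (a u) w1 \<noteq> E (c v) w1" "E (a u) w2 \<noteq> E (c v) w2" for w1 w2
    using that ag by blast
  have c_a: False if "1 \<le> j" "j \<le> u" "j \<noteq> v" "v \<le> i" "i \<le> k" "i \<noteq> u" for i j
  proof (rule two_distinguishers)
    show "c j \<in> H - {a u, c v}" using c_in_H c_neq_a c_eq_iff that u v by auto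
    show "a i \<in> H - {a u, c v}" using a_in_H a_eq_iff a_neq_c that u v by auto
    show "c j \<noteq> a i" using c_neq_a that u v by auto
    show "E (a u) (c j) \<noteq> E (c v) (c j)" using a_c_adj_iff[of u j] c_c_nonadj[of v j] that u v by auto
    show "E (a u) (a i) \<noteq> E (c v) (a i)" using a_a_nonadj[of u i] c_a_adj_iff[of i v] that u v by auto
  qed
  have c_c: False if "1 \<le> j" "j < j'" "j' \<le> u" "j \<noteq> v" "j' \<noteq> v" for j j'
  proof (rule two_distinguishers)
    show "c j \<in> H - {a u, c v}" "c j' \<in> H - {a u, c v}" using c_in_H c_neq_a c_eq_iff that u v by auto
    show "c j \<noteq> c j'" using c_eq_iff that u by auto
    show "E (a u) (c j) \<noteq> E (c v) (c j)" "E (a u) (c j') \<noteq> E (c v) (c j')"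
      using a_c_adj_iff[of u j] c_c_nonadj[of v j] a_c_adj_iff[of u j'] c_c_nonadj[of v j'] that u v by auto
  qed
  have a_a: False if "v \<le> i" "i < i'" "i' \<le> k" "i \<noteq> u" "i' \<noteq> u" for i i'
  proof (rule two_distinguishers)
    show "a i \<in> H - {a u, c v}" "a i' \<in> H - {a u, c v}" using a_in_H a_eq_iff a_neq_c that u v by auto
    show "a i \<noteq> a i'" using a_eq_iff that v by auto
    show "E (a u) (a i) \<noteq> E (c v) (a i)" "E (a u) (a i') \<noteq> E (c v) (a i')"
      using a_a_nonadj[of u i] c_a_adj_iff[of i v] a_a_nonadj[of u i'] c_a_adj_iff[of i' v] that u v by auto
  qed
  have "u = v"
  proof (rule ccontr)
    assume "u \<noteq> v"
    then show False using c_a[of 1 k] c_a[of u v] u v by (cases "u < v") auto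
  qed
  moreover have "k \<le> 2"
  proof (rule ccontr)
    assume "\<not> k \<le> 2"
    then consider "3 \<le> u" | "u = 2" | "u = 1" using u by linarith
    then show False using c_c[of 1 2] c_a[of 1 3] a_a[of 2 3] \<open>u = v\<close> \<open>\<not> k \<le> 2\<close> by cases auto
  qed
  ultimately show ?thesis by auto
qed

text \<open>The positions of distinct \<open>h', g \<in> H\<close> that are distinguished within \<open>H\<close> only by \<open>h\<close>.\<close>
definition agreeing_but_one_rel :: "'a \<Rightarrow> 'a \<Rightarrow> 'a \<Rightarrow> bool" where
  "agreeing_but_one_rel h' g h \<longleftrightarrow>
    (\<exists>u. 1 \<le> u \<and> u < k \<and> ((h' = a u \<and> g = a (u+1)) \<or> (h' = a (u+1) \<and> g = a u)) \<and> h = c (u+1)) \<or>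
    (\<exists>v. 1 \<le> v \<and> v < k \<and> ((h' = c v \<and> g = c (v+1)) \<or> (h' = c (v+1) \<and> g = c v)) \<and> h = a v) \<or>
    (k = 2 \<and> E h' g)"

lemma H_pair_agreeing_but_one:
  assumes k: "2 \<le> k" and H: "h' \<in> H" "g \<in> H" "h \<in> H" and ne: "h' \<noteq> g" "h \<noteq> h'" "h \<noteq> g"
    and ag: "\<forall>w\<in>H - {h, h', g}. E h' w \<longleftrightarrow> E g w"
  shows "agreeing_but_one_rel h' g h"
  using H(1)
proof (rule H_cases)
  fix u assume u: "1 \<le> u" "u \<le> k" "h' = a u"
  show ?thesis using H(2)
  proof (rule H_cases)
    fix u' assume u': "1 \<le> u'" "u' \<le> k" "g = a u'"
    hence "u \<noteq> u'" using u ne by auto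
    show ?thesis
    proof (cases "u < u'")
      case True
      have "u' = u + 1 \<and> h = c (u + 1)" using a_pair_agreeing_but_one[of u u' h] True u u' ne ag H by auto
      thus ?thesis unfolding agreeing_but_one_rel_def using u u' by auto
    next
      case False
      hence "u' < u" using \<open>u \<noteq> u'\<close> by auto
      have ag': "\<forall>w\<in>H - {h, a u', a u}. E (a u') w \<longleftrightarrow> E (a u) w" using ag u u' by auto
      have "u = u' + 1 \<and> h = c (u' + 1)" using a_pair_agreeing_but_one[of u' u h] \<open>u' < u\<close> u u' ne ag' H by auto
      thus ?thesis unfolding agreeing_but_one_rel_def using u u' by auto
    qed
  next
    fix v assume v: "1 \<le> v" "v \<le> k" "g = c v"
    have "k \<le> 2 \<and> u = v" using a_c_agreeing_but_one[of u v h] u v H ag by auto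
    thus ?thesis unfolding agreeing_but_one_rel_def using u v k a_c_adj_iff[of u v] by auto
  qed
next
  fix v assume v: "1 \<le> v" "v \<le> k" "h' = c v"
  show ?thesis using H(2)
  proof (rule H_cases)
    fix u assume u: "1 \<le> u" "u \<le> k" "g = a u"
    have ag': "\<forall>w\<in>H - {h, a u, c v}. E (a u) w \<longleftrightarrow> E (c v) w" using ag u v by auto
    have "k \<le> 2 \<and> u = v" using a_c_agreeing_but_one[of u v h] u v H ag' by auto
    thus ?thesis unfolding agreeing_but_one_rel_def using u v k c_a_adj_iff[of u v] by auto
  next
    fix v' assume v': "1 \<le> v'" "v' \<le> k" "g = c v'"
    hence "v \<noteq> v'" using v ne by auto
    show ?thesis
    proof (cases "v < v'")
      case True
      have "v' = v + 1 \<and> h = a v" using c_pair_agreeing_but_one[of v v' h] True v v' ne ag H by auto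
      thus ?thesis unfolding agreeing_but_one_rel_def using v v' by auto
    next
      case False
      hence "v' < v" using \<open>v \<noteq> v'\<close> by auto
      have ag': "\<forall>w\<in>H - {h, c v', c v}. E (c v') w \<longleftrightarrow> E (c v) w" using ag v v' by auto
      have "v = v' + 1 \<and> h = a v'" using c_pair_agreeing_but_one[of v' v h] \<open>v' < v\<close> v v' ne ag' H by auto
      thus ?thesis unfolding agreeing_but_one_rel_def using v v' by auto
    qed
  qed
qed



lemma twinD: "twin y h \<Longrightarrow> y \<in> V" "twin y h \<Longrightarrow> y \<notin> H" "twin y h \<Longrightarrow> h \<in> H"
  "twin y h \<Longrightarrow> w \<in> H \<Longrightarrow> w \<noteq> h \<Longrightarrow> E y w \<longleftrightarrow> E h w"
  unfolding twin_def by auto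

lemma half_chain_upd_a:
  assumes tw: "twin y (a t)" and t: "1 \<le> t" "t \<le> k"
  shows "half_chain V E k (a(t := y)) c"
proof -
  have yV: "y \<in> V" and yH: "y \<notin> H" using twinD tw by auto
  have ya: "\<not> E y (a v)" if "1 \<le> v" "v \<le> k" "v \<noteq> t" for v
    using twinD(4)[OF tw a_in_H[OF that(1,2)]] a_eq_iff[of v t] a_a_nonadj[of t v] that t by auto
  have yc: "E y (c v) \<longleftrightarrow> v \<le> t" if "1 \<le> v" "v \<le> k" for v
    using twinD(4)[OF tw c_in_H[OF that]] c_neq_a[of t v] a_c_adj_iff[of t v] that t by auto
  have yne: "y \<noteq> a v" "y \<noteq> c v" if "1 \<le> v" "v \<le> k" for v using not_in_H_neq[OF yH that] by auto
  show ?thesis unfolding half_chain_def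
  proof (intro conjI)
    show "\<forall>u\<in>{1..k}. (a(t := y)) u \<in> V \<and> c u \<in> V" using yV a_in_V c_in_V by auto
  next
    show "inj_on (a(t := y)) {1..k}"
      by (rule inj_on_fun_updI[OF half_chainD(2)]) (use yH in \<open>auto simp: H_def\<close>)
  next
    show "inj_on c {1..k}" using half_chainD(3) .
  next
    show "\<forall>u\<in>{1..k}. \<forall>v\<in>{1..k}. (a(t := y)) u \<noteq> c v \<and> \<not> E ((a(t := y)) u) ((a(t := y)) v) \<and>
       \<not> E (c u) (c v) \<and> (E ((a(t := y)) u) (c v) \<longleftrightarrow> v \<le> u)"
    proof (intro ballI conjI)
      fix u v assume u: "u \<in> {1..k}" and v: "v \<in> {1..k}"
      show "(a(t := y)) u \<noteq> c v" using yne a_neq_c u v by auto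
      show "\<not> E ((a(t := y)) u) ((a(t := y)) v)"
        using ya a_a_nonadj u v adj_commute[of "a u" y] by auto
      show "\<not> E (c u) (c v)" using c_c_nonadj u v by auto
      show "E ((a(t := y)) u) (c v) \<longleftrightarrow> v \<le> u" using yc a_c_adj_iff u v by auto
    qed
  qed
qed

lemma half_chain_upd_c:
  assumes tw: "twin y (c t)" and t: "1 \<le> t" "t \<le> k"
  shows "half_chain V E k a (c(t := y))"
proof -
  have yV: "y \<in> V" and yH: "y \<notin> H" using twinD tw by auto
  have yc: "\<not> E y (c v)" if "1 \<le> v" "v \<le> k" "v \<noteq> t" for v
    using twinD(4)[OF tw c_in_H[OF that(1,2)]] c_eq_iff[of v t] c_c_nonadj[of t v] that t by auto
  have ya: "E y (a v) \<longleftrightarrow> t \<le> v" if "1 \<le> v" "v \<le> k" for v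
    using twinD(4)[OF tw a_in_H[OF that]] a_neq_c[of v t] c_a_adj_iff[of v t] that t by auto
  have yne: "y \<noteq> a v" "y \<noteq> c v" if "1 \<le> v" "v \<le> k" for v using not_in_H_neq[OF yH that] by auto
  show ?thesis unfolding half_chain_def
  proof (intro conjI)
    show "\<forall>u\<in>{1..k}. a u \<in> V \<and> (c(t := y)) u \<in> V" using yV a_in_V c_in_V by auto
  next
    show "inj_on a {1..k}" using half_chainD(2) .
  next
    show "inj_on (c(t := y)) {1..k}"
      by (rule inj_on_fun_updI[OF half_chainD(3)]) (use yH in \<open>auto simp: H_def\<close>)
  next
    show "\<forall>u\<in>{1..k}. \<forall>v\<in>{1..k}. a u \<noteq> (c(t := y)) v \<and> \<not> E (a u) (a v) \<and>
       \<not> E ((c(t := y)) u) ((c(t := y)) v) \<and> (E (a u) ((c(t := y)) v) \<longleftrightarrow> v \<le> u)"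
    proof (intro ballI conjI)
      fix u v assume u: "u \<in> {1..k}" and v: "v \<in> {1..k}"
      show "a u \<noteq> (c(t := y)) v" using yne a_neq_c u v by auto
      show "\<not> E (a u) (a v)" using a_a_nonadj u v by auto
      show "\<not> E ((c(t := y)) u) ((c(t := y)) v)"
        using yc c_c_nonadj u v adj_commute[of "c u" y] by auto
      show "E (a u) ((c(t := y)) v) \<longleftrightarrow> v \<le> u" using ya a_c_adj_iff u v adj_commute[of "a u" y] by auto
    qed
  qed
qed

lemma half_chain_graph_upd_a: "twin y (a t) \<Longrightarrow> 1 \<le> t \<Longrightarrow> t \<le> k \<Longrightarrow> half_chain_graph V E k (a(t := y)) c"
  unfolding half_chain_graph_def half_chain_graph_axioms_def using forbidden_free_axioms half_chain_upd_a by blast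

lemma half_chain_graph_upd_c: "twin y (c t) \<Longrightarrow> 1 \<le> t \<Longrightarrow> t \<le> k \<Longrightarrow> half_chain_graph V E k a (c(t := y))"
  unfolding half_chain_graph_def half_chain_graph_axioms_def using forbidden_free_axioms half_chain_upd_c by blast

lemma H_upd_a:
  assumes "twin y (a t)" "1 \<le> t" "t \<le> k"
  shows "half_chain_graph.H k (a(t := y)) c = insert y (H - {a t})"
proof -
  interpret I: half_chain_graph V E k "a(t := y)" c using half_chain_graph_upd_a assms by blast
  have "(a(t := y)) ` {1..k} = insert y (a ` {1..k} - {a t})"
    using assms(2,3) a_eq_iff by (force simp: image_iff)
  moreover have "a t \<notin> c ` {1..k}" using a_neq_c assms(2,3) by auto
  ultimately show ?thesis unfolding I.H_def H_def by auto
qed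

lemma H_upd_c:
  assumes "twin y (c t)" "1 \<le> t" "t \<le> k"
  shows "half_chain_graph.H k a (c(t := y)) = insert y (H - {c t})"
proof -
  interpret I: half_chain_graph V E k a "c(t := y)" using half_chain_graph_upd_c assms by blast
  have "(c(t := y)) ` {1..k} = insert y (c ` {1..k} - {c t})"
    using assms(2,3) c_eq_iff by (force simp: image_iff)
  moreover have "c t \<notin> a ` {1..k}" using c_neq_a assms(2,3) by auto
  ultimately show ?thesis unfolding I.H_def H_def by auto
qed

text \<open>Replacing \<open>h\<close> by its twin \<open>y\<close> gives another half chain, to which \<open>outside_vertex_cases\<close>
  applies.\<close>
lemma twin_replaced_cases:
  assumes tw: "twin y h" and z: "z \<in> V" "z \<notin> H" "z \<noteq> y"
  shows "(\<forall>w\<in>insert y (H - {h}). E z w) \<or> (\<forall>w\<in>insert y (H - {h}). \<not> E z w) \<or>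
         (\<exists>g\<in>insert y (H - {h}). \<forall>w\<in>insert y (H - {h}) - {g}. E z w \<longleftrightarrow> E g w)"
  using twinD(3)[OF tw]
proof (rule H_cases)
  fix t assume t: "1 \<le> t" "t \<le> k" "h = a t"
  interpret I: half_chain_graph V E k "a(t := y)" c using half_chain_graph_upd_a tw t by blast
  have IH: "I.H = insert y (H - {h})" using H_upd_a tw t by auto
  from I.outside_vertex_cases[of z] z show ?thesis unfolding I.twin_def IH by auto
next
  fix t assume t: "1 \<le> t" "t \<le> k" "h = c t"
  interpret I: half_chain_graph V E k a "c(t := y)" using half_chain_graph_upd_c tw t by blast
  have IH: "I.H = insert y (H - {h})" using H_upd_c tw t by auto
  from I.outside_vertex_cases[of z] z show ?thesis unfolding I.twin_def IH by auto
qed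

lemma half_chain_insert_at:
  assumes p: "1 \<le> p" "p \<le> k + 1" and q: "p \<le> q" "q \<le> p + 1" "q \<le> k + 1"
    and x: "x \<in> V" "x \<notin> H" and w: "w \<in> V" "w \<notin> H" "x \<noteq> w"
    and xa: "\<And>i. 1 \<le> i \<Longrightarrow> i \<le> k \<Longrightarrow> \<not> E x (a i)"
    and wc: "\<And>j. 1 \<le> j \<Longrightarrow> j \<le> k \<Longrightarrow> \<not> E w (c j)"
    and xw: "E x w \<longleftrightarrow> q \<le> p"
    and xc: "\<And>j. 1 \<le> j \<Longrightarrow> j \<le> k \<Longrightarrow> E x (c j) \<longleftrightarrow> (if j < q then j else j + 1) \<le> p"
    and aw: "\<And>i. 1 \<le> i \<Longrightarrow> i \<le> k \<Longrightarrow> E (a i) w \<longleftrightarrow> q \<le> (if i < p then i else i + 1)"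
  shows "half_chain V E (k+1) (insert_at a p x) (insert_at c q w)"
proof -
  let ?A = "insert_at a p x" and ?C = "insert_at c q w"
  have q': "1 \<le> q" "q \<le> k + 1" using p q by auto
  have xne: "x \<noteq> a i" "x \<noteq> c i" "w \<noteq> a i" "w \<noteq> c i" if "i \<in> {1..k}" for i
    using not_in_H_neq[OF x(2)] not_in_H_neq[OF w(2)] that by auto
  show ?thesis unfolding half_chain_def
  proof (intro conjI ballI)
    fix u assume u: "u \<in> {1..k + 1}"
    show "?A u \<in> V" by (cases rule: insert_at_cases[OF u p, of a x]) (use x a_in_V in auto)
    show "?C u \<in> V" by (cases rule: insert_at_cases[OF u q', of c w]) (use w c_in_V in auto)
  next
    show "inj_on ?A {1..k + 1}"
      by (rule inj_on_insert_at[OF half_chainD(2) _ p]) (use x(2) in \<open>auto simp: H_def\<close>)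
    show "inj_on ?C {1..k + 1}"
      by (rule inj_on_insert_at[OF half_chainD(3) _ q']) (use w(2) in \<open>auto simp: H_def\<close>)
  next
    fix u v assume u: "u \<in> {1..k + 1}" and v: "v \<in> {1..k + 1}"
    show "?A u \<noteq> ?C v"
      by (cases rule: insert_at_cases[OF u p, of a x]; cases rule: insert_at_cases[OF v q', of c w])
        (use xne w(3) a_neq_c in auto)
    show "\<not> E (?A u) (?A v)"
      by (cases rule: insert_at_cases[OF u p, of a x]; cases rule: insert_at_cases[OF v p, of a x])
        (use xa a_a_nonadj adj_commute[of _ x] in auto)
    show "\<not> E (?C u) (?C v)"
      by (cases rule: insert_at_cases[OF u q', of c w]; cases rule: insert_at_cases[OF v q', of c w])
        (use wc c_c_nonadj adj_commute[of _ w] in auto)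
    show "E (?A u) (?C v) \<longleftrightarrow> v \<le> u"
      by (cases rule: insert_at_cases[OF u p, of a x]; cases rule: insert_at_cases[OF v q', of c w])
        (use xw xc aw a_c_adj_iff q in auto)
  qed
qed


definition false_twin :: "'a \<Rightarrow> 'a \<Rightarrow> bool" where "false_twin y h \<longleftrightarrow> twin y h \<and> \<not> E y h"

lemma twin_of_a_a_nonadj:
  assumes "twin y (a u)" "1 \<le> u" "u \<le> k" "1 \<le> i" "i \<le> k" "i \<noteq> u"
  shows "\<not> E y (a i)"
  using twinD(4)[OF assms(1) a_in_H[OF assms(4,5)]] a_eq_iff[of i u] a_a_nonadj[of u i] assms by auto

lemma twin_of_a_c_adj_iff:
  assumes "twin y (a u)" "1 \<le> u" "u \<le> k" "1 \<le> j" "j \<le> k"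
  shows "E y (c j) \<longleftrightarrow> j \<le> u"
  using twinD(4)[OF assms(1) c_in_H[OF assms(4,5)]] c_neq_a[of u j] a_c_adj_iff[of u j] assms by auto

lemma twin_of_c_c_nonadj:
  assumes "twin y (c u)" "1 \<le> u" "u \<le> k" "1 \<le> j" "j \<le> k" "j \<noteq> u"
  shows "\<not> E y (c j)"
  using twinD(4)[OF assms(1) c_in_H[OF assms(4,5)]] c_eq_iff[of j u] c_c_nonadj[of u j] assms by auto

lemma twin_of_c_a_adj_iff:
  assumes "twin y (c u)" "1 \<le> u" "u \<le> k" "1 \<le> i" "i \<le> k"
  shows "E y (a i) \<longleftrightarrow> u \<le> i"
  using twinD(4)[OF assms(1) a_in_H[OF assms(4,5)]] a_neq_c[of i u] c_a_adj_iff[of i u] assms by auto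

lemma false_twin_of_a_a_nonadj: "false_twin y (a u) \<Longrightarrow> 1 \<le> u \<Longrightarrow> u \<le> k \<Longrightarrow> 1 \<le> i \<Longrightarrow> i \<le> k \<Longrightarrow> \<not> E y (a i)"
  unfolding false_twin_def using twin_of_a_a_nonadj by (cases "i = u") auto

lemma false_twin_of_c_c_nonadj: "false_twin y (c u) \<Longrightarrow> 1 \<le> u \<Longrightarrow> u \<le> k \<Longrightarrow> 1 \<le> j \<Longrightarrow> j \<le> k \<Longrightarrow> \<not> E y (c j)"
  unfolding false_twin_def using twin_of_c_c_nonadj by (cases "j = u") auto

lemma extend_by_adjacent_false_twins:
  assumes ya: "false_twin ya (a u)" and yc: "false_twin yc (c (u+1))" and e: "E ya yc" and u: "1 \<le> u" "u < k"
  shows "\<exists>a' c'. half_chain V E (k+1) a' c'"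
proof -
  have tw: "twin ya (a u)" "twin yc (c (u+1))" using ya yc unfolding false_twin_def by auto
  have "half_chain V E (k+1) (insert_at a (u+1) ya) (insert_at c (u+1) yc)"
  proof (rule half_chain_insert_at)
    show "1 \<le> u + 1" "u + 1 \<le> k + 1" "u + 1 \<le> u + 1" "u + 1 \<le> u + 1 + 1" "u + 1 \<le> k + 1" using u by auto
    show "ya \<in> V" "ya \<notin> H" "yc \<in> V" "yc \<notin> H" using twinD tw by auto
    show "ya \<noteq> yc" using e by auto
    show "\<not> E ya (a i)" if "1 \<le> i" "i \<le> k" for i using false_twin_of_a_a_nonadj[OF ya] u that by auto
    show "\<not> E yc (c j)" if "1 \<le> j" "j \<le> k" for j using false_twin_of_c_c_nonadj[OF yc] u that by auto
    show "E ya yc \<longleftrightarrow> u + 1 \<le> u + 1" using e by auto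
    show "E ya (c j) \<longleftrightarrow> (if j < u + 1 then j else j + 1) \<le> u + 1" if "1 \<le> j" "j \<le> k" for j
      using twin_of_a_c_adj_iff[OF tw(1)] u that by auto
    show "E (a i) yc \<longleftrightarrow> u + 1 \<le> (if i < u + 1 then i else i + 1)" if "1 \<le> i" "i \<le> k" for i
      using twin_of_c_a_adj_iff[OF tw(2), of i] u that adj_commute[of "a i" yc] by auto
  qed
  thus ?thesis by blast
qed

lemma extend_by_nonadjacent_false_twins:
  assumes ya: "false_twin ya (a u)" and yc: "false_twin yc (c u)" and e: "\<not> E ya yc" "ya \<noteq> yc" and u: "1 \<le> u" "u \<le> k"
  shows "\<exists>a' c'. half_chain V E (k+1) a' c'"
proof -
  have tw: "twin ya (a u)" "twin yc (c u)" using ya yc unfolding false_twin_def by auto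
  have "half_chain V E (k+1) (insert_at a u ya) (insert_at c (u+1) yc)"
  proof (rule half_chain_insert_at)
    show "1 \<le> u" "u \<le> k + 1" "u \<le> u + 1" "u + 1 \<le> u + 1" "u + 1 \<le> k + 1" using u by auto
    show "ya \<in> V" "ya \<notin> H" "yc \<in> V" "yc \<notin> H" using twinD tw by auto
    show "ya \<noteq> yc" using e by auto
    show "\<not> E ya (a i)" if "1 \<le> i" "i \<le> k" for i using false_twin_of_a_a_nonadj[OF ya] u that by auto
    show "\<not> E yc (c j)" if "1 \<le> j" "j \<le> k" for j using false_twin_of_c_c_nonadj[OF yc] u that by auto
    show "E ya yc \<longleftrightarrow> u + 1 \<le> u" using e by auto
    show "E ya (c j) \<longleftrightarrow> (if j < u + 1 then j else j + 1) \<le> u" if "1 \<le> j" "j \<le> k" for j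
      using twin_of_a_c_adj_iff[OF tw(1)] u that by auto
    show "E (a i) yc \<longleftrightarrow> u + 1 \<le> (if i < u then i else i + 1)" if "1 \<le> i" "i \<le> k" for i
      using twin_of_c_a_adj_iff[OF tw(2), of i] u that adj_commute[of "a i" yc] by auto
  qed
  thus ?thesis by blast
qed

lemma extend_at_top:
  assumes y: "false_twin y (a k)" and z: "z \<in> V" "z \<notin> H" "\<forall>w\<in>H. \<not> E z w" and e: "E z y" and k: "1 \<le> k"
  shows "\<exists>a' c'. half_chain V E (k+1) a' c'"
proof -
  have tw: "twin y (a k)" using y unfolding false_twin_def by auto
  have "half_chain V E (k+1) (insert_at a (k+1) y) (insert_at c (k+1) z)"
  proof (rule half_chain_insert_at)
    show "1 \<le> k + 1" "k + 1 \<le> k + 1" "k + 1 \<le> k + 1" "k + 1 \<le> k + 1 + 1" "k + 1 \<le> k + 1" by auto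
    show "y \<in> V" "y \<notin> H" using twinD tw by auto
    show "z \<in> V" "z \<notin> H" using z by auto
    show "y \<noteq> z" using e by auto
    show "\<not> E y (a i)" if "1 \<le> i" "i \<le> k" for i using false_twin_of_a_a_nonadj[OF y] k that by auto
    show "\<not> E z (c j)" if "1 \<le> j" "j \<le> k" for j using z(3) c_in_H that by auto
    show "E y z \<longleftrightarrow> k + 1 \<le> k + 1" using e adj_commute by auto
    show "E y (c j) \<longleftrightarrow> (if j < k + 1 then j else j + 1) \<le> k + 1" if "1 \<le> j" "j \<le> k" for j
      using twin_of_a_c_adj_iff[OF tw] k that by auto
    show "E (a i) z \<longleftrightarrow> k + 1 \<le> (if i < k + 1 then i else i + 1)" if "1 \<le> i" "i \<le> k" for i
      using z(3) a_in_H[OF that] adj_commute[of "a i" z] that by auto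
  qed
  thus ?thesis by blast
qed

lemma extend_at_bottom:
  assumes y: "false_twin y (c 1)" and z: "z \<in> V" "z \<notin> H" "\<forall>w\<in>H. \<not> E z w" and e: "E z y" and k: "1 \<le> k"
  shows "\<exists>a' c'. half_chain V E (k+1) a' c'"
proof -
  have tw: "twin y (c 1)" using y unfolding false_twin_def by auto
  have "half_chain V E (k+1) (insert_at a 1 z) (insert_at c 1 y)"
  proof (rule half_chain_insert_at)
    show "1 \<le> (1::nat)" "1 \<le> k + 1" "1 \<le> (1::nat)" "(1::nat) \<le> 1 + 1" "1 \<le> k + 1" by auto
    show "y \<in> V" "y \<notin> H" using twinD tw by auto
    show "z \<in> V" "z \<notin> H" using z by auto
    show "z \<noteq> y" using e by auto
    show "\<not> E z (a i)" if "1 \<le> i" "i \<le> k" for i using z(3) a_in_H that by auto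
    show "\<not> E y (c j)" if "1 \<le> j" "j \<le> k" for j using false_twin_of_c_c_nonadj[OF y] k that by auto
    show "E z y \<longleftrightarrow> 1 \<le> (1::nat)" using e by auto
    show "E z (c j) \<longleftrightarrow> (if j < 1 then j else j + 1) \<le> 1" if "1 \<le> j" "j \<le> k" for j
      using z(3) c_in_H[OF that] that by auto
    show "E (a i) y \<longleftrightarrow> 1 \<le> (if i < 1 then i else i + 1)" if "1 \<le> i" "i \<le> k" for i
      using twin_of_c_a_adj_iff[OF tw, of i] k that adj_commute[of "a i" y] by auto
  qed
  thus ?thesis by blast
qed

lemma H_other_vertex: "1 \<le> k \<Longrightarrow> h \<in> H \<Longrightarrow> \<exists>w\<in>H. w \<noteq> h"
  using a_in_H[of 1] c_in_H[of 1] a_neq_c[of 1 1] by (metis le_refl)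

lemma two_le_card_H: "1 \<le> k \<Longrightarrow> 2 \<le> card H"
proof -
  assume "1 \<le> k"
  then have "{a 1, c 1} \<subseteq> H" "card {a 1, c 1} = 2" using a_in_H c_in_H a_neq_c[of 1 1] by auto
  moreover have "finite H" using H_subset_V finite_V finite_subset by auto
  ultimately show ?thesis by (metis card_mono)
qed

lemma anticomplete_adj_twin_of_c_1:
  assumes k: "2 \<le> k" and z: "z \<in> V" "z \<notin> H" "\<forall>w\<in>H. \<not> E z w"
    and tw: "twin y (c 1)" and e: "E z y"
  shows "\<exists>a' c'. half_chain V E (k + 1) a' c'"
proof (cases "E y (c 1)")
  case True
  have yV: "y \<in> V" and yH: "y \<notin> H" using twinD tw by auto
  have False
  proof (rule no_induced_bull[of y "a k" "c 1" z "c 2"])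
    show "y \<in> V" "a k \<in> V" "c 1 \<in> V" "z \<in> V" "c 2 \<in> V" using yV a_in_V c_in_V z k by auto
    have "y \<noteq> a k" "y \<noteq> c 1" "y \<noteq> c 2" "z \<noteq> a k" "z \<noteq> c 1" "z \<noteq> c 2"
      using not_in_H_neq[OF yH] not_in_H_neq[OF z(2)] k by auto
    moreover have "a k \<noteq> c 1" "a k \<noteq> c 2" "c 1 \<noteq> c 2" using a_neq_c c_eq_iff k by auto
    ultimately show "distinct [y, a k, c 1, z, c 2]" using e by auto
    show "E y (a k)" using twin_of_c_a_adj_iff[OF tw, of k] k by auto
    show "E (a k) (c 1)" "E (a k) (c 2)" using a_c_adj_iff k by auto
    show "E y (c 1)" by (rule True)
    show "E y z" using e adj_commute by auto
    show "\<not> E y (c 2)" using twin_of_c_c_nonadj[OF tw, of 2] k by auto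
    show "\<not> E (a k) z" "\<not> E (c 1) z" "\<not> E z (c 2)" using z(3) a_in_H c_in_H k adj_commute by auto
    show "\<not> E (c 1) (c 2)" using c_c_nonadj k by auto
  qed
  then show ?thesis ..
next
  case False
  then have "false_twin y (c 1)" using tw unfolding false_twin_def by auto
  then show ?thesis using extend_at_bottom[OF _ z e] k by auto
qed

lemma anticomplete_adj_twin_of_a_k:
  assumes k: "2 \<le> k" and z: "z \<in> V" "z \<notin> H" "\<forall>w\<in>H. \<not> E z w"
    and tw: "twin y (a k)" and e: "E z y"
  shows "\<exists>a' c'. half_chain V E (k + 1) a' c'"
proof (cases "E y (a k)")
  case True
  have yV: "y \<in> V" and yH: "y \<notin> H" using twinD tw by auto
  have km: "1 \<le> k - 1" "k - 1 \<le> k" "k - 1 \<noteq> k" using k by auto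
  have False
  proof (rule no_induced_bull[of y "c 1" "a k" z "a (k - 1)"])
    show "y \<in> V" "c 1 \<in> V" "a k \<in> V" "z \<in> V" "a (k - 1) \<in> V" using yV a_in_V c_in_V z k km by auto
    have "y \<noteq> a k" "y \<noteq> c 1" "y \<noteq> a (k - 1)" "z \<noteq> a k" "z \<noteq> c 1" "z \<noteq> a (k - 1)"
      using not_in_H_neq[OF yH] not_in_H_neq[OF z(2)] k km by auto
    moreover have "c 1 \<noteq> a k" "c 1 \<noteq> a (k - 1)" "a k \<noteq> a (k - 1)"
      using c_neq_a a_eq_iff[of k "k - 1"] k km by auto
    ultimately show "distinct [y, c 1, a k, z, a (k - 1)]" using e by auto
    show "E y (c 1)" using twin_of_a_c_adj_iff[OF tw, of 1] k by auto
    show "E (c 1) (a k)" "E (c 1) (a (k - 1))" using c_a_adj_iff k km by auto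
    show "E y (a k)" by (rule True)
    show "E y z" using e adj_commute by auto
    show "\<not> E y (a (k - 1))" using twin_of_a_a_nonadj[OF tw, of "k - 1"] k km by auto
    show "\<not> E (c 1) z" "\<not> E (a k) z" "\<not> E z (a (k - 1))" using z(3) a_in_H c_in_H k km adj_commute by auto
    show "\<not> E (a k) (a (k - 1))" using a_a_nonadj k km by auto
  qed
  then show ?thesis ..
next
  case False
  then have "false_twin y (a k)" using tw unfolding false_twin_def by auto
  then show ?thesis using extend_at_top[OF _ z e] k by auto
qed

text \<open>Replacing \<open>h\<close> by its twin \<open>y\<close> gives a new half chain, on which \<open>z\<close> must behave like a
  twin of some \<open>g\<close>; then \<open>g\<close> has \<open>h\<close> as its only neighbour in \<open>H\<close>, which pins \<open>(g, h)\<close> down to an end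
  of the chain.\<close>
lemma anticomplete_adj_twin_extends:
  assumes k: "2 \<le> k" and z: "z \<in> V" "z \<notin> H" "\<forall>w\<in>H. \<not> E z w"
    and tw: "twin y h" and e: "E z y"
  shows "\<exists>a' c'. half_chain V E (k + 1) a' c'"
proof -
  have zy: "z \<noteq> y" using e by auto
  have hH: "h \<in> H" and yH: "y \<notin> H" using twinD tw by auto
  obtain w0 where w0: "w0 \<in> H" "w0 \<noteq> h" using H_other_vertex[OF _ hH] k by auto
  from twin_replaced_cases[OF tw z(1,2) zy] w0 z(3) e
  obtain g where g: "g \<in> insert y (H - {h})" "\<forall>w\<in>insert y (H - {h}) - {g}. E z w \<longleftrightarrow> E g w"
    by blast
  have "g \<noteq> y"
  proof
    assume "g = y"
    have "\<not> E h w" if "w \<in> H" "w \<noteq> h" for w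
      using g(2) \<open>g = y\<close> that yH z(3) twinD(4)[OF tw that] by auto
    moreover obtain w where "w \<in> H" "E h w" using H_vertex_has_neighbour[OF _ hH] k by auto
    ultimately show False by (metis adj_irrefl)
  qed
  then have gH: "g \<in> H" "g \<noteq> h" using g(1) by auto
  have "E g y" using g(2) \<open>g \<noteq> y\<close> e by auto
  then have "E g h" using twinD(4)[OF tw gH] adj_commute by auto
  moreover have "\<forall>w\<in>H - {g, h}. \<not> E g w" using g(2) z(3) yH by auto
  ultimately have "(g = a 1 \<and> h = c 1) \<or> (g = c k \<and> h = a k)"
    by (rule H_vertex_with_single_neighbour[OF gH(1) hH])
  then show ?thesis
    using anticomplete_adj_twin_of_c_1[OF k z _ e] anticomplete_adj_twin_of_a_k[OF k z _ e] tw by auto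
qed

lemma complete_nonadj_twin:
  assumes k: "3 \<le> k" and z: "z \<in> V" "z \<notin> H" "\<forall>w\<in>H. E z w" and tw: "twin y h" and e: "\<not> E z y"
    and zy: "z \<noteq> y"
  shows False
proof -
  have hH: "h \<in> H" and yH: "y \<notin> H" and yV: "y \<in> V" using twinD tw by auto
  obtain w0 where w0: "w0 \<in> H" "w0 \<noteq> h" using H_other_vertex[OF _ hH] k by auto
  from twin_replaced_cases[OF tw z(1,2) zy]
  consider (C) "\<forall>w\<in>insert y (H - {h}). E z w" | (N) "\<forall>w\<in>insert y (H - {h}). \<not> E z w"
    | (T) g where "g \<in> insert y (H - {h})" "\<forall>w\<in>insert y (H - {h}) - {g}. E z w \<longleftrightarrow> E g w" by blast
  thus False
  proof cases
    case C thus False using e by auto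
  next
    case N thus False using w0 z(3) by auto
  next
    case T
    show False
    proof (cases "g = y")
      case True
      have "E h w" if "w \<in> H" "w \<noteq> h" for w
        using T(2) True that yH z(3) twinD(4)[OF tw that] by auto
      moreover obtain w where "w \<in> H - {h}" "\<not> E h w" using H_vertex_has_non_neighbour[OF _ hH] k by auto
      ultimately show False by auto
    next
      case False
      hence gH: "g \<in> H" "g \<noteq> h" using T(1) by auto
      have "\<forall>w\<in>H - {g, h}. E g w" using T(2) z(3) yH by auto
      thus False using no_H_vertex_adjacent_to_all_but_one[OF k gH(1) hH] by auto
    qed
  qed
qed

text \<open>The positions of \<open>h', h\<close> in which twins \<open>y'\<close> of \<open>h'\<close> and \<open>y\<close> of \<open>h\<close>, adjacent iff \<open>e\<close>,
  can be adjacent differently from \<open>h'\<close> and \<open>h\<close>; each of them lengthens the chain.\<close>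
definition twin_pair_rel :: "'a \<Rightarrow> 'a \<Rightarrow> bool \<Rightarrow> bool" where
  "twin_pair_rel h' h e \<longleftrightarrow>
    (\<exists>u. 1 \<le> u \<and> u \<le> k \<and> ((h' = a u \<and> h = c u \<and> \<not> e) \<or> (h' = c u \<and> h = a u \<and> \<not> e))) \<or>
    (\<exists>u. 1 \<le> u \<and> u < k \<and> ((h' = a u \<and> h = c (u+1) \<and> e) \<or> (h' = c (u+1) \<and> h = a u \<and> e)))"

lemma twin_pair_rel_if_agreeing_but_one:
  assumes agree: "agreeing_but_one_rel h' g h"
    and adj_y_y': "E y y' \<longleftrightarrow> E g h" and adj_y'_h': "E y' h' \<longleftrightarrow> E g h'"
  shows "(\<not> E y' h' \<and> twin_pair_rel h' h (E y y')) \<or> (k = 2 \<and> E y' h')"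
proof -
  have agree_cases: "(\<exists>u. 1 \<le> u \<and> u < k \<and> h = c (u+1) \<and> ((h' = a u \<and> g = a (u+1)) \<or> (h' = a (u+1) \<and> g = a u))) \<or>
    (\<exists>v. 1 \<le> v \<and> v < k \<and> h = a v \<and> ((h' = c v \<and> g = c (v+1)) \<or> (h' = c (v+1) \<and> g = c v))) \<or>
    (k = 2 \<and> E h' g)" using agree unfolding agreeing_but_one_rel_def by blast
  show ?thesis using agree_cases
  proof (elim disjE)
    assume "\<exists>u. 1 \<le> u \<and> u < k \<and> h = c (u+1) \<and> ((h' = a u \<and> g = a (u+1)) \<or> (h' = a (u+1) \<and> g = a u))"
    then obtain u where u: "1 \<le> u" "u < k" and hc: "h = c (u+1)"
      and o: "(h' = a u \<and> g = a (u+1)) \<or> (h' = a (u+1) \<and> g = a u)" by blast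
    show ?thesis using o
    proof
      assume hg: "h' = a u \<and> g = a (u+1)"
      have "\<not> E y' h'" using adj_y'_h' hg a_a_nonadj[of "u+1" u] u by auto
      moreover have "E y y'" using adj_y_y' hg hc a_c_adj_iff[of "u+1" "u+1"] u by auto
      ultimately show ?thesis unfolding twin_pair_rel_def using hg hc u by auto
    next
      assume hg: "h' = a (u+1) \<and> g = a u"
      have "\<not> E y' h'" using adj_y'_h' hg a_a_nonadj[of u "u+1"] u by auto
      moreover have "\<not> E y y'" using adj_y_y' hg hc a_c_adj_iff[of u "u+1"] u by auto
      moreover have "\<exists>u'. 1 \<le> u' \<and> u' \<le> k \<and> h' = a u' \<and> h = c u'" using hg hc u by (intro exI[of _ "u+1"]) auto
      ultimately show ?thesis unfolding twin_pair_rel_def by blast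
    qed
  next
    assume "\<exists>v. 1 \<le> v \<and> v < k \<and> h = a v \<and> ((h' = c v \<and> g = c (v+1)) \<or> (h' = c (v+1) \<and> g = c v))"
    then obtain v where v: "1 \<le> v" "v < k" and ha: "h = a v"
      and o: "(h' = c v \<and> g = c (v+1)) \<or> (h' = c (v+1) \<and> g = c v)" by blast
    show ?thesis using o
    proof
      assume hg: "h' = c v \<and> g = c (v+1)"
      have "\<not> E y' h'" using adj_y'_h' hg c_c_nonadj[of "v+1" v] v by auto
      moreover have "\<not> E y y'" using adj_y_y' hg ha c_a_adj_iff[of v "v+1"] v by auto
      ultimately show ?thesis unfolding twin_pair_rel_def using hg ha v by auto
    next
      assume hg: "h' = c (v+1) \<and> g = c v"
      have "\<not> E y' h'" using adj_y'_h' hg c_c_nonadj[of v "v+1"] v by auto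
      moreover have "E y y'" using adj_y_y' hg ha c_a_adj_iff[of v v] v by auto
      ultimately show ?thesis unfolding twin_pair_rel_def using hg ha v by auto
    qed
  next
    assume "k = 2 \<and> E h' g"
    thus ?thesis using adj_y'_h' adj_commute by auto
  qed
qed

lemma twin_pair_cases_via_twin_of_g:
  assumes k: "2 \<le> k" and tw: "twin y h" and tw': "twin y' h'" and ne: "h \<noteq> h'" "y \<noteq> y'"
    and d: "E y y' \<noteq> E h h'"
    and g: "g \<in> insert y (H - {h})" "\<forall>w\<in>insert y (H - {h}) - {g}. E y' w \<longleftrightarrow> E g w"
  shows "(\<not> E y' h' \<and> twin_pair_rel h' h (E y y')) \<or> (k = 2 \<and> E y' h')"
proof -
  have hH: "h \<in> H" and yH: "y \<notin> H" and hH': "h' \<in> H" using twinD tw tw' by auto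
  have yy: "y' \<noteq> y" using ne by auto
  have twin_y': "E y' w \<longleftrightarrow> E h' w" if "w \<in> H" "w \<noteq> h'" for w using twinD(4)[OF tw' that] .
  have twin_y: "E y w \<longleftrightarrow> E h w" if "w \<in> H" "w \<noteq> h" for w using twinD(4)[OF tw that] .
  have adj_y'_y: "E y' y \<longleftrightarrow> E y y'" using adj_commute by auto
  show ?thesis
  proof (cases "g = y")
    case True
    have "\<forall>w\<in>H - {h, h'}. E h w \<longleftrightarrow> E h' w"
    proof
      fix w assume w: "w \<in> H - {h, h'}"
      hence "E y' w \<longleftrightarrow> E y w" using g(2) True yH by auto
      thus "E h w \<longleftrightarrow> E h' w" using twin_y twin_y' w by auto
    qed
    thus ?thesis using H_vertices_distinguished[OF k hH hH' ne(1)] by auto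
  next
    case gy: False
    show ?thesis
    proof (cases "g = h'")
      case True
      have "y \<noteq> h'" using yH hH' by auto
      hence "E y' y \<longleftrightarrow> E h' y" using g(2) True yy by auto
      moreover have "E h' y \<longleftrightarrow> E h h'" using twin_y[OF hH' ne(1)[symmetric]] adj_commute by auto
      ultimately show ?thesis using d adj_y'_y by auto
    next
      case gh: False
      have gH: "g \<in> H" "g \<noteq> h" using g(1) gy by auto
      have ag: "\<forall>w\<in>H - {h, h', g}. E h' w \<longleftrightarrow> E g w"
      proof
        fix w assume w: "w \<in> H - {h, h', g}"
        hence "E y' w \<longleftrightarrow> E g w" using g(2) yH by auto
        thus "E h' w \<longleftrightarrow> E g w" using twin_y' w by auto
      qed
      have adj_y_y': "E y y' \<longleftrightarrow> E g h"
        using g(2) gy yH adj_y'_y twin_y[OF gH] adj_commute[of y g] adj_commute[of g h] by auto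
      have adj_y'_h': "E y' h' \<longleftrightarrow> E g h'" using g(2) hH' ne gh by auto
      have agree: "agreeing_but_one_rel h' g h" by (rule H_pair_agreeing_but_one[OF k hH' gH(1) hH]) (use gh gH ne ag in auto)
      show ?thesis by (rule twin_pair_rel_if_agreeing_but_one[OF agree adj_y_y' adj_y'_h'])
    qed
  qed
qed

lemma twin_pair_cases:
  assumes k: "2 \<le> k" and tw: "twin y h" and tw': "twin y' h'" and ne: "h \<noteq> h'" "y \<noteq> y'"
    and d: "E y y' \<noteq> E h h'"
  shows "(\<not> E y' h' \<and> twin_pair_rel h' h (E y y')) \<or> (k = 2 \<and> E y' h')"
proof -
  have hH: "h \<in> H" and yH: "y \<notin> H" and yV: "y \<in> V" using twinD tw by auto
  have hH': "h' \<in> H" and yH': "y' \<notin> H" and yV': "y' \<in> V" using twinD tw' by auto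
  have yy: "y' \<noteq> y" using ne by auto
  have twin_y': "E y' w \<longleftrightarrow> E h' w" if "w \<in> H" "w \<noteq> h'" for w using twinD(4)[OF tw' that] .
  have twin_y: "E y w \<longleftrightarrow> E h w" if "w \<in> H" "w \<noteq> h" for w using twinD(4)[OF tw that] .
  have adj_y'_y: "E y' y \<longleftrightarrow> E y y'" using adj_commute by auto
  from twin_replaced_cases[OF tw yV' yH' yy]
  consider (C) "\<forall>w\<in>insert y (H - {h}). E y' w" | (N) "\<forall>w\<in>insert y (H - {h}). \<not> E y' w"
    | (T) g where "g \<in> insert y (H - {h})" "\<forall>w\<in>insert y (H - {h}) - {g}. E y' w \<longleftrightarrow> E g w" by blast
  thus ?thesis
  proof cases
    case C
    have "E y' h'" using C hH' ne by auto
    moreover have "k = 2"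
    proof (rule ccontr)
      assume "k \<noteq> 2"
      hence "3 \<le> k" using k by auto
      have "\<forall>w\<in>H - {h', h}. E h' w" using C twin_y' by auto
      thus False using no_H_vertex_adjacent_to_all_but_one[OF \<open>3 \<le> k\<close> hH' hH] by auto
    qed
    ultimately show ?thesis by auto
  next
    case N
    have n1: "\<not> E y' h'" "\<not> E y' y" using N hH' ne by auto
    hence "E h h'" using d adj_y'_y by auto
    hence Eh: "E h' h" using adj_commute by auto
    have "\<forall>w\<in>H - {h', h}. \<not> E h' w" using N twin_y' by auto
    from H_vertex_with_single_neighbour[OF hH' hH Eh this]
    have "twin_pair_rel h' h (E y y')"
    proof
      assume "h' = a 1 \<and> h = c 1"
      thus ?thesis unfolding twin_pair_rel_def using n1 adj_y'_y k by (intro disjI1 exI[of _ 1]) auto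
    next
      assume "h' = c k \<and> h = a k"
      thus ?thesis unfolding twin_pair_rel_def using n1 adj_y'_y k by (intro disjI1 exI[of _ k]) auto
    qed
    thus ?thesis using n1 by auto
  next
    case T
    then show ?thesis by (rule twin_pair_cases_via_twin_of_g[OF k tw tw' ne d])
  qed
qed

lemma twin_pair_extends:
  assumes tw: "twin y h" and tw': "twin y' h'" and ne: "y \<noteq> y'"
    and f: "\<not> E y h" "\<not> E y' h'" and r: "twin_pair_rel h' h (E y y')"
  shows "\<exists>a' c'. half_chain V E (k+1) a' c'"
  using r unfolding twin_pair_rel_def
proof (elim disjE exE conjE)
  fix u assume u: "1 \<le> u" "u \<le> k" "h' = a u" "h = c u" "\<not> E y y'"
  show ?thesis by (rule extend_by_nonadjacent_false_twins[of y' u y]) (use u tw tw' f ne adj_commute in \<open>auto simp: false_twin_def\<close>)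
next
  fix u assume u: "1 \<le> u" "u \<le> k" "h' = c u" "h = a u" "\<not> E y y'"
  show ?thesis by (rule extend_by_nonadjacent_false_twins[of y u y']) (use u tw tw' f ne adj_commute in \<open>auto simp: false_twin_def\<close>)
next
  fix u assume u: "1 \<le> u" "u < k" "h' = a u" "h = c (u+1)" "E y y'"
  show ?thesis by (rule extend_by_adjacent_false_twins[of y' u y]) (use u tw tw' f ne adj_commute in \<open>auto simp: false_twin_def\<close>)
next
  fix u assume u: "1 \<le> u" "u < k" "h' = c (u+1)" "h = a u" "E y y'"
  show ?thesis by (rule extend_by_adjacent_false_twins[of y u y']) (use u tw tw' f ne adj_commute in \<open>auto simp: false_twin_def\<close>)
qed


lemma twin_compl_edges:
  assumes J: "half_chain_graph V (compl_edges V E) k' a' c'" and JH: "half_chain_graph.H k' a' c' = H"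
  shows "half_chain_graph.twin V (compl_edges V E) k' a' c' y h \<longleftrightarrow> twin y h"
proof -
  have eq: "(compl_edges V E y w \<longleftrightarrow> compl_edges V E h w) \<longleftrightarrow> (E y w \<longleftrightarrow> E h w)"
    if "y \<in> V - H" "h \<in> H" "w \<in> H - {h}" for w
  proof -
    have "y \<noteq> w" "h \<noteq> w" "y \<in> V" "w \<in> V" "h \<in> V" using that H_subset_V by auto
    thus ?thesis using compl_edges_iff[of _ V _ E] by simp
  qed
  show ?thesis unfolding half_chain_graph.twin_def[OF J] twin_def JH using eq by blast
qed

text \<open>For \<open>k = 2\<close> the chain is the induced path \<open>a\<^sub>1 c\<^sub>1 a\<^sub>2 c\<^sub>2\<close>; its complement is the path
  \<open>c\<^sub>1 c\<^sub>2 a\<^sub>1 a\<^sub>2\<close>, which is the chain with \<open>a' = (a\<^sub>2, c\<^sub>2)\<close> and \<open>c' = (a\<^sub>1, c\<^sub>1)\<close>.\<close>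
definition compl_a :: "nat \<Rightarrow> 'a" where "compl_a = (\<lambda>i. if i = 1 then a 2 else c 2)"
definition compl_c :: "nat \<Rightarrow> 'a" where "compl_c = (\<lambda>i. if i = 1 then a 1 else c 1)"

lemma chain_2_facts:
  assumes "k = 2"
  shows "a 1 \<in> V" "a 2 \<in> V" "c 1 \<in> V" "c 2 \<in> V"
    "a 1 \<noteq> a 2" "a 1 \<noteq> c 1" "a 1 \<noteq> c 2" "a 2 \<noteq> c 1" "a 2 \<noteq> c 2" "c 1 \<noteq> c 2"
    "E (a 1) (c 1)" "E (a 2) (c 1)" "E (a 2) (c 2)" "\<not> E (a 1) (c 2)" "\<not> E (a 1) (a 2)" "\<not> E (c 1) (c 2)"
  using assms a_in_V c_in_V a_eq_iff[of 1 2] c_eq_iff[of 1 2] a_neq_c a_c_adj_iff a_a_nonadj c_c_nonadj by auto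

lemma half_chain_graph_compl_2:
  assumes "k = 2"
  shows "half_chain_graph V (compl_edges V E) 2 compl_a compl_c"
proof -
  note f = chain_2_facts[OF assms]
  have fs: "E (c 1) (a 1)" "E (c 1) (a 2)" "E (c 2) (a 2)" "\<not> E (c 2) (a 1)" "\<not> E (a 2) (a 1)" "\<not> E (c 2) (c 1)"
    using f adj_commute by auto
  have two: "{1..2::nat} = {1,2}" by auto
  have "half_chain V (compl_edges V E) 2 compl_a compl_c"
    unfolding half_chain_def two compl_a_def compl_c_def inj_on_def compl_edges_def
    using f fs by auto
  thus ?thesis unfolding half_chain_graph_def half_chain_graph_axioms_def using forbidden_free_compl by blast
qed

lemma compl_H_2:
  assumes "k = 2"
  shows "half_chain_graph.H 2 compl_a compl_c = H"
proof -
  interpret J: half_chain_graph V "compl_edges V E" 2 compl_a compl_c by (rule half_chain_graph_compl_2[OF assms])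
  have two: "{1..2::nat} = {1,2}" by auto
  show ?thesis unfolding J.H_def H_def using assms two by (auto simp: compl_a_def compl_c_def)
qed

lemma twin_pair_rel_2_cases:
  assumes k: "k = 2" and r: "twin_pair_rel x x' e"
  shows "(x = a 1 \<and> x' = c 1 \<and> \<not> e) \<or> (x = a 2 \<and> x' = c 2 \<and> \<not> e) \<or> (x = c 1 \<and> x' = a 1 \<and> \<not> e) \<or>
    (x = c 2 \<and> x' = a 2 \<and> \<not> e) \<or> (x = a 1 \<and> x' = c 2 \<and> e) \<or> (x = c 2 \<and> x' = a 1 \<and> e)"
proof -
  from r[unfolded twin_pair_rel_def]
  consider (same) u where "u = 1 \<or> u = 2" "(x = a u \<and> x' = c u \<and> \<not> e) \<or> (x = c u \<and> x' = a u \<and> \<not> e)"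
    | (shifted) "(x = a 1 \<and> x' = c 2 \<and> e) \<or> (x = c 2 \<and> x' = a 1 \<and> e)"
    using k by (auto simp: numeral_2_eq_2 le_Suc_eq less_Suc_eq)
  then show ?thesis by cases auto
qed

lemma twin_pair_rel_compl_2_contra:
  assumes k: "k = 2" and r: "twin_pair_rel x x' e"
    and r': "half_chain_graph.twin_pair_rel 2 compl_a compl_c x' x (\<not> e)"
  shows False
proof -
  interpret J: half_chain_graph V "compl_edges V E" 2 compl_a compl_c
    by (rule half_chain_graph_compl_2[OF k])
  have "(x' = a 2 \<and> x = a 1 \<and> e) \<or> (x' = c 2 \<and> x = c 1 \<and> e) \<or> (x' = a 1 \<and> x = a 2 \<and> e) \<or>
    (x' = c 1 \<and> x = c 2 \<and> e) \<or> (x' = a 2 \<and> x = c 1 \<and> \<not> e) \<or> (x' = c 1 \<and> x = a 2 \<and> \<not> e)"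
    using J.twin_pair_rel_2_cases[OF refl r'] unfolding compl_a_def compl_c_def by simp
  then show False using twin_pair_rel_2_cases[OF k r] chain_2_facts[OF k] by auto
qed

definition O_map :: "nat + nat \<Rightarrow> 'a" where
  "O_map x = (case x of Inl i \<Rightarrow> a i | Inr j \<Rightarrow> c (k + 1 - j))"

lemma O_map_simps: "O_map (Inl i) = a i" "O_map (Inr j) = c (k + 1 - j)"
  unfolding O_map_def by simp_all

lemma O_map_image: "O_map ` O_verts k = H"
proof -
  have "(\<lambda>j. k + 1 - j) ` {1..k} = {1..k}"
  proof
    show "{1..k} \<subseteq> (\<lambda>j. k + 1 - j) ` {1..k}"
    proof
      fix i assume "i \<in> {1..k}"
      then show "i \<in> (\<lambda>j. k + 1 - j) ` {1..k}" by (intro image_eqI[of _ _ "k + 1 - i"]) auto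
    qed
  qed auto
  then have "(\<lambda>j. c (k + 1 - j)) ` {1..k} = c ` {1..k}" by (metis image_image)
  then show ?thesis unfolding O_verts_def H_def image_Un image_image O_map_simps by simp
qed

lemma inj_on_O_map: "inj_on O_map (O_verts k)"
proof -
  have flip: "1 \<le> k + 1 - j" "k + 1 - j \<le> k" if "1 \<le> j" "j \<le> k" for j using that by auto
  have Ov: "x \<in> O_verts k \<longleftrightarrow> (\<exists>i. 1 \<le> i \<and> i \<le> k \<and> x = Inl i) \<or> (\<exists>j. 1 \<le> j \<and> j \<le> k \<and> x = Inr j)" for x
    unfolding O_verts_def by auto
  show ?thesis
  proof (rule inj_onI)
    fix x y assume x: "x \<in> O_verts k" and y: "y \<in> O_verts k" and eq: "O_map x = O_map y"
    from x[unfolded Ov] y[unfolded Ov] show "x = y"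
    proof (elim disjE exE conjE)
      fix i i' assume "1 \<le> i" "i \<le> k" "x = Inl i" "1 \<le> i'" "i' \<le> k" "y = Inl i'"
      thus ?thesis using eq O_map_simps a_eq_iff by auto
    next
      fix i j assume h: "1 \<le> i" "i \<le> k" "x = Inl i" "1 \<le> j" "j \<le> k" "y = Inr j"
      thus ?thesis using eq O_map_simps a_neq_c[of i "k + 1 - j"] flip[OF h(4,5)] by auto
    next
      fix i j assume h: "1 \<le> j" "j \<le> k" "x = Inr j" "1 \<le> i" "i \<le> k" "y = Inl i"
      thus ?thesis using eq O_map_simps a_neq_c[of i "k + 1 - j"] flip[OF h(1,2)] by auto
    next
      fix j j' assume h: "1 \<le> j" "j \<le> k" "x = Inr j" "1 \<le> j'" "j' \<le> k" "y = Inr j'"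
      hence "c (k + 1 - j) = c (k + 1 - j')" using eq O_map_simps by auto
      hence "k + 1 - j = k + 1 - j'" using c_eq_iff[of "k + 1 - j" "k + 1 - j'"] h flip[OF h(1,2)] flip[OF h(4,5)] by auto
      thus ?thesis using h by auto
    qed
  qed
qed

lemma O_map_adj_iff: "\<forall>x\<in>O_verts k. \<forall>y\<in>O_verts k. O_edges k x y \<longleftrightarrow> E (O_map x) (O_map y)"
proof -
  have flip: "1 \<le> k + 1 - j" "k + 1 - j \<le> k" if "1 \<le> j" "j \<le> k" for j using that by auto
  have Ov: "x \<in> O_verts k \<longleftrightarrow> (\<exists>i. 1 \<le> i \<and> i \<le> k \<and> x = Inl i) \<or> (\<exists>j. 1 \<le> j \<and> j \<le> k \<and> x = Inr j)" for x
    unfolding O_verts_def by auto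
  show ?thesis
  proof (intro ballI)
    fix x y assume x: "x \<in> O_verts k" and y: "y \<in> O_verts k"
    have Oe: "O_edges k x y \<longleftrightarrow> (\<exists>i j. ((x = Inl i \<and> y = Inr j) \<or> (x = Inr j \<and> y = Inl i)) \<and> k + 1 \<le> i + j)"
      unfolding O_edges_def using x y by auto
    from x[unfolded Ov] y[unfolded Ov] show "O_edges k x y \<longleftrightarrow> E (O_map x) (O_map y)"
    proof (elim disjE exE conjE)
      fix i i' assume "1 \<le> i" "i \<le> k" "x = Inl i" "1 \<le> i'" "i' \<le> k" "y = Inl i'"
      thus ?thesis using Oe O_map_simps a_a_nonadj by auto
    next
      fix i j assume h: "1 \<le> i" "i \<le> k" "x = Inl i" "1 \<le> j" "j \<le> k" "y = Inr j"
      have "E (a i) (c (k + 1 - j)) \<longleftrightarrow> k + 1 - j \<le> i" using a_c_adj_iff[of i "k + 1 - j"] h flip[OF h(4,5)] by auto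
      thus ?thesis using Oe O_map_simps h by auto
    next
      fix i j assume h: "1 \<le> j" "j \<le> k" "x = Inr j" "1 \<le> i" "i \<le> k" "y = Inl i"
      have "E (c (k + 1 - j)) (a i) \<longleftrightarrow> k + 1 - j \<le> i" using c_a_adj_iff[of i "k + 1 - j"] h flip[OF h(1,2)] by auto
      thus ?thesis using Oe O_map_simps h by auto
    next
      fix j j' assume h: "1 \<le> j" "j \<le> k" "x = Inr j" "1 \<le> j'" "j' \<le> k" "y = Inr j'"
      thus ?thesis using Oe O_map_simps c_c_nonadj[of "k + 1 - j" "k + 1 - j'"] flip[OF h(1,2)] flip[OF h(4,5)] by auto
    qed
  qed
qed

lemma half_graph_if_covers:
  assumes "1 \<le> k" "V = H"
  shows "half_graph V E"
  using assms inj_on_O_map O_map_image O_map_adj_iff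
  unfolding half_graph_def graph_iso_def bij_betw_def by blast

end
section \<open>A maximal half graph covers a prime graph\<close>

locale maximal_half_chain = half_chain_graph +
  assumes prime: "prime_graph V E" and two_le_k: "2 \<le> k"
    and maximal: "\<And>a' c'. \<not> half_chain V E (k + 1) a' c'"
    and maximal_compl: "\<And>a' c'. \<not> half_chain V (compl_edges V E) (k + 1) a' c'"
begin

lemma anticomplete_nonadj_twin:
  assumes "z \<in> V" "z \<notin> H" "\<forall>w\<in>H. \<not> E z w" "twin y h"
  shows "\<not> E z y"
  using anticomplete_adj_twin_extends[OF two_le_k assms] maximal by blast

lemma maximal_half_chain_compl_2:
  assumes "k = 2" shows "maximal_half_chain V (compl_edges V E) 2 compl_a compl_c"
  using half_chain_graph_compl_2[OF assms] prime_graph_compl_edges[OF prime] maximal maximal_compl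
    compl_edges_compl_edges[OF graph] assms
  unfolding maximal_half_chain_def maximal_half_chain_axioms_def by auto

lemma twin_iff_compl_twin_2:
  assumes "k = 2" shows "half_chain_graph.twin V (compl_edges V E) 2 compl_a compl_c y h \<longleftrightarrow> twin y h"
  by (rule twin_compl_edges[OF half_chain_graph_compl_2[OF assms] compl_H_2[OF assms]])

text \<open>For \<open>k = 2\<close> this is \<open>anticomplete_nonadj_twin\<close> in the complement.\<close>
lemma complete_adj_twin:
  assumes z: "z \<in> V" "z \<notin> H" "\<forall>w\<in>H. E z w" and tw: "twin y h" and "z \<noteq> y"
  shows "E z y"
proof (rule ccontr)
  assume ne: "\<not> E z y"
  show False
  proof (cases "k = 2")
    case False
    then show False using complete_nonadj_twin[OF _ z tw ne \<open>z \<noteq> y\<close>] two_le_k by auto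
  next
    case True
    interpret J: maximal_half_chain V "compl_edges V E" 2 compl_a compl_c
      by (rule maximal_half_chain_compl_2[OF True])
    have JH: "J.H = H" by (rule compl_H_2[OF True])
    have "\<forall>w\<in>J.H. \<not> compl_edges V E z w" using z JH unfolding compl_edges_def by auto
    moreover have "compl_edges V E z y"
      using compl_edges_iff[of z V y E] z ne \<open>z \<noteq> y\<close> twinD(1)[OF tw] by auto
    ultimately show False
      using J.anticomplete_nonadj_twin[OF z(1)] z(2) JH tw twin_iff_compl_twin_2[OF True] by auto
  qed
qed

lemma non_twin_adj_twin_iff:
  assumes z: "z \<in> V" "z \<notin> H" "\<nexists>h. twin z h" and tw: "twin y h"
  shows "E z y \<longleftrightarrow> E z h"
proof -
  have "z \<noteq> y" using z(3) tw by auto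
  from outside_vertex_cases[OF z(1,2)] z(3) consider "\<forall>w\<in>H. E z w" | "\<forall>w\<in>H. \<not> E z w" by blast
  then show ?thesis
    using complete_adj_twin[OF z(1,2) _ tw \<open>z \<noteq> y\<close>] anticomplete_nonadj_twin[OF z(1,2) _ tw]
      twinD(3)[OF tw] by cases auto
qed

lemma twins_adj_iff_2:
  assumes k: "k = 2" and tw: "twin y h" and tw': "twin y' h'" and ne: "h \<noteq> h'" "y \<noteq> y'"
    and d: "E y y' \<noteq> E h h'"
  shows False
proof -
  interpret J: maximal_half_chain V "compl_edges V E" 2 compl_a compl_c
    by (rule maximal_half_chain_compl_2[OF k])
  have Jtw: "J.twin y h" "J.twin y' h'" using twin_iff_compl_twin_2[OF k] tw tw' by auto
  have V: "h \<in> V" "h' \<in> V" "y \<in> V" "y' \<in> V" using twinD tw tw' H_subset_V by auto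
  have H: "y \<noteq> h" "y' \<noteq> h'"
    using twinD(2)[OF tw] twinD(3)[OF tw] twinD(2)[OF tw'] twinD(3)[OF tw'] by auto
  have cE: "compl_edges V E x x' \<longleftrightarrow> \<not> E x x'" if "x \<in> V" "x' \<in> V" "x \<noteq> x'" for x x'
    using compl_edges_iff[of x V x' E] that by auto
  have d': "E y' y \<noteq> E h' h" using d adj_commute by auto
  have cd: "compl_edges V E y y' \<noteq> compl_edges V E h h'" "compl_edges V E y' y \<noteq> compl_edges V E h' h"
    using d d' cE V ne by auto
  have c_yh: "compl_edges V E y h \<longleftrightarrow> \<not> E y h" "compl_edges V E y' h' \<longleftrightarrow> \<not> E y' h'"
    using cE V H by auto
  have c_yy: "compl_edges V E y y' \<longleftrightarrow> \<not> E y' y" "compl_edges V E y' y \<longleftrightarrow> \<not> E y y'"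
    using cE V ne adj_commute by auto
  show False
  proof (cases "E y h"; cases "E y' h'")
    assume "E y h" "E y' h'"
    with J.twin_pair_cases[OF J.two_le_k Jtw ne cd(1)] c_yh
    have "J.twin_pair_rel h' h (compl_edges V E y y')" by auto
    with J.twin_pair_extends[OF Jtw ne(2)] \<open>E y h\<close> \<open>E y' h'\<close> c_yh J.maximal show False by auto
  next
    assume "E y h" "\<not> E y' h'"
    with twin_pair_cases[OF two_le_k tw tw' ne d] have "twin_pair_rel h' h (E y y')" by auto
    moreover from J.twin_pair_cases[OF J.two_le_k Jtw(2) Jtw(1) ne[symmetric] cd(2)] \<open>E y h\<close> c_yh
    have "J.twin_pair_rel h h' (\<not> E y y')" using c_yy by auto
    ultimately show False using twin_pair_rel_compl_2_contra[OF k] by blast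
  next
    assume "\<not> E y h" "E y' h'"
    with twin_pair_cases[OF two_le_k tw' tw ne[symmetric] d'] have "twin_pair_rel h h' (E y' y)" by auto
    moreover from J.twin_pair_cases[OF J.two_le_k Jtw ne cd(1)] \<open>E y' h'\<close> c_yh
    have "J.twin_pair_rel h' h (\<not> E y' y)" using c_yy by auto
    ultimately show False using twin_pair_rel_compl_2_contra[OF k] by blast
  next
    assume "\<not> E y h" "\<not> E y' h'"
    with twin_pair_cases[OF two_le_k tw tw' ne d] have "twin_pair_rel h' h (E y y')" by auto
    with twin_pair_extends[OF tw tw' ne(2) \<open>\<not> E y h\<close> \<open>\<not> E y' h'\<close>] maximal show False by blast
  qed
qed

lemma twins_adj_iff:
  assumes tw: "twin y h" and tw': "twin y' h'" and ne: "h \<noteq> h'" "y \<noteq> y'"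
  shows "E y y' \<longleftrightarrow> E h h'"
proof (rule ccontr)
  assume "\<not> ?thesis"
  then have d: "E y y' \<noteq> E h h'" by auto
  show False
  proof (cases "k = 2")
    case True
    show False by (rule twins_adj_iff_2[OF True tw tw' ne d])
  next
    case False
    have d': "E y' y \<noteq> E h' h" using d adj_commute by auto
    from twin_pair_cases[OF two_le_k tw tw' ne d] False
    have "\<not> E y' h'" "twin_pair_rel h' h (E y y')" by auto
    moreover from twin_pair_cases[OF two_le_k tw' tw ne[symmetric] d'] False have "\<not> E y h" by auto
    ultimately show False using twin_pair_extends[OF tw tw' ne(2)] maximal by blast
  qed
qed

text \<open>Otherwise \<open>H\<close> together with all twins is a homogeneous set.\<close>
lemma outside_vertex_is_twin:
  assumes "z \<in> V" "z \<notin> H" shows "\<exists>h. twin z h"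
proof (rule ccontr)
  assume no_twin: "\<nexists>h. twin z h"
  define T where "T = {y. \<exists>h. twin y h}"
  have T: "T \<subseteq> V - H" unfolding T_def twin_def by auto
  show False
  proof (rule prime_graph_no_homogeneous_set[OF prime graph, of "H \<union> T"])
    show "H \<union> T \<subseteq> V" using H_subset_V T by auto
    show "2 \<le> card (H \<union> T)"
      using two_le_card_H two_le_k card_mono[of "H \<union> T" H] finite_subset[OF \<open>H \<union> T \<subseteq> V\<close> finite_V]
      by auto
    show "H \<union> T \<noteq> V" using assms no_twin unfolding T_def by auto
    fix b assume "b \<in> V - (H \<union> T)"
    then have b: "b \<in> V" "b \<notin> H" "\<nexists>h. twin b h" unfolding T_def by auto
    have "E b x \<longleftrightarrow> E b h" if "twin x h" for x h by (rule non_twin_adj_twin_iff[OF b that])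
    with outside_vertex_cases[OF b(1,2)] b(3) twinD(3)
    show "(\<forall>x\<in>H \<union> T. E b x) \<or> (\<forall>x\<in>H \<union> T. \<not> E b x)" unfolding T_def by blast
  qed
qed

text \<open>Otherwise a vertex of \<open>H\<close> together with its twins is a homogeneous set.\<close>
lemma covers_V: "V = H"
proof (rule ccontr)
  assume "V \<noteq> H"
  then obtain y0 where "y0 \<in> V" "y0 \<notin> H" using H_subset_V by auto
  then obtain h where tw0: "twin y0 h" using outside_vertex_is_twin by blast
  have hH: "h \<in> H" using twinD tw0 by auto
  define S where "S = insert h {y. twin y h}"
  show False
  proof (rule prime_graph_no_homogeneous_set[OF prime graph, of S])
    show "S \<subseteq> V" unfolding S_def using hH H_subset_V twinD(1) by auto
    have "{h, y0} \<subseteq> S" "h \<noteq> y0" unfolding S_def using tw0 twinD(2,3)[OF tw0] by auto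
    then show "2 \<le> card S"
      using finite_subset[OF \<open>S \<subseteq> V\<close> finite_V] by (metis card_2_iff card_mono)
    obtain w where "w \<in> H" "w \<noteq> h" using H_other_vertex[OF _ hH] two_le_k by auto
    then show "S \<noteq> V" unfolding S_def using H_subset_V twinD(2) by auto
    fix b assume b: "b \<in> V - S"
    show "(\<forall>x\<in>S. E b x) \<or> (\<forall>x\<in>S. \<not> E b x)"
    proof (cases "b \<in> H")
      case True
      then have "E b x \<longleftrightarrow> E b h" if "x \<in> S" for x
        using that b twinD(4)[OF _ True] adj_commute unfolding S_def by auto
      then show ?thesis by blast
    next
      case False
      then obtain h' where tb: "twin b h'" using b outside_vertex_is_twin by blast
      then have "h' \<noteq> h" using b unfolding S_def by auto
      have "E b x \<longleftrightarrow> E h' h" if "x \<in> S" for x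
      proof (cases "x = h")
        case True
        then show ?thesis using twinD(4)[OF tb hH] \<open>h' \<noteq> h\<close> by auto
      next
        case False
        then have "twin x h" "x \<noteq> b" using that b unfolding S_def by auto
        then show ?thesis using twins_adj_iff[OF tb _ \<open>h' \<noteq> h\<close>] by auto
      qed
      then show ?thesis by blast
    qed
  qed
qed

end

lemma half_chain_length_le_card:
  assumes "half_chain V E k a c" "finite V" shows "k \<le> card V"
proof -
  have "inj_on a {1..k}" "a ` {1..k} \<subseteq> V" using assms(1) unfolding half_chain_def by auto
  then have "card {1..k} \<le> card V" by (rule card_inj_on_le[OF _ _ assms(2)])
  then show ?thesis by simp
qed

lemma induced_P4_half_chain:
  assumes "graph V E" "induced_P4 V E w1 w2 w3 w4"
  shows "half_chain V E 2 (\<lambda>i. if i = 1 then w1 else w3) (\<lambda>i. if i = 1 then w2 else w4)"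
proof -
  have two: "{1..2::nat} = {1, 2}" by auto
  have "E w2 w1" "E w3 w2" "E w4 w3" "\<not> E w3 w1" "\<not> E w4 w1" "\<not> E w4 w2"
    using assms graphD(4)[OF assms(1)] unfolding induced_P4_def by blast+
  then show ?thesis
    using assms(2) graphD(5)[OF assms(1)] unfolding half_chain_def two inj_on_def induced_P4_def by auto
qed

lemma exists_maximal_half_chain:
  assumes "graph V E" and start: "half_chain V E k0 a0 c0"
  obtains k a c where "k0 \<le> k" "half_chain V E k a c \<or> half_chain V (compl_edges V E) k a c"
    "\<And>a c. \<not> half_chain V E (k + 1) a c" "\<And>a c. \<not> half_chain V (compl_edges V E) (k + 1) a c"
proof -
  define K where "K = {k. \<exists>a c. half_chain V E k a c \<or> half_chain V (compl_edges V E) k a c}"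
  have "finite K"
    using half_chain_length_le_card graphD(1)[OF assms(1)] unfolding K_def
    by (intro finite_nat_set_iff_bounded_le[THEN iffD2]) blast
  moreover have "k0 \<in> K" using start unfolding K_def by blast
  ultimately have "Max K \<in> K" "k0 \<le> Max K"
    using Max_in[of K] Max_ge[of K] by (fastforce simp del: Max_ge_iff)+
  moreover have "Max K + 1 \<notin> K"
  proof
    assume "Max K + 1 \<in> K"
    then have "Max K + 1 \<le> Max K" by (rule Max_ge[OF \<open>finite K\<close>])
    then show False by simp
  qed
  moreover from \<open>Max K \<in> K\<close> obtain a c
    where "half_chain V E (Max K) a c \<or> half_chain V (compl_edges V E) (Max K) a c"
    unfolding K_def by blast
  ultimately show ?thesis using that unfolding K_def by blast
qed

lemma half_graph_if_maximal_half_chain: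
  assumes "forbidden_free V E" "prime_graph V E" "half_chain V E k a c" "2 \<le> k"
    and "\<And>a c. \<not> half_chain V E (k + 1) a c" "\<And>a c. \<not> half_chain V (compl_edges V E) (k + 1) a c"
  shows "half_graph V E"
proof -
  interpret maximal_half_chain V E k a c
    using assms unfolding maximal_half_chain_def maximal_half_chain_axioms_def half_chain_graph_def
      half_chain_graph_axioms_def by blast
  show ?thesis using half_graph_if_covers[OF _ covers_V] two_le_k by simp
qed

theorem lemma4p3:
  fixes V :: "'a set" and E :: "'a \<Rightarrow> 'a \<Rightarrow> bool"
  assumes "graph V E"
    and "prime_graph V E"
    and "free_P5_coP5_C5_bull V E"
  shows "half_graph V E \<or> half_graph V (compl_edges V E)"
proof -
  have free: "forbidden_free V E" using assms(1,3) unfolding forbidden_free_def by blast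
  obtain w1 w2 w3 w4 where "induced_P4 V E w1 w2 w3 w4"
    using prime_graph_has_induced_P4 assms(1,2) by blast
  from exists_maximal_half_chain[OF assms(1) induced_P4_half_chain[OF assms(1) this]]
  obtain k a c where k: "2 \<le> k"
    and chain: "half_chain V E k a c \<or> half_chain V (compl_edges V E) k a c"
    and maximal: "\<And>a c. \<not> half_chain V E (k + 1) a c"
      "\<And>a c. \<not> half_chain V (compl_edges V E) (k + 1) a c" by blast
  from chain show ?thesis
  proof
    assume "half_chain V E k a c"
    then show ?thesis using half_graph_if_maximal_half_chain[OF free assms(2) _ k maximal] by blast
  next
    assume "half_chain V (compl_edges V E) k a c"
    then have "half_graph V (compl_edges V E)"
      by (rule half_graph_if_maximal_half_chain[OF forbidden_free.forbidden_free_compl[OF free]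
            prime_graph_compl_edges[OF assms(2)] _ k])
        (use maximal in \<open>simp_all add: compl_edges_compl_edges[OF assms(1)]\<close>)
    then show ?thesis ..
  qed
qed

end
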